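(* Let $n\ge 3$ be finite and let $\mathfrak D$ be a polyadic equality algebra of dimension $n$ that is generated by the set $\{x\in D:\Delta x\neq n\}$. If the diagonal free reduct $\mathfrak{Rd}_{df}\mathfrak D$ is completely representable, then $\mathfrak D$ is completely representable.
   Context: For an element $x$ of an algebra of dimension $n$, $\Delta x=\{i<n: \mathsf c_ix\neq x\}$ is its dimension set. $\mathfrak{Rd}_{df}\mathfrak D$ is the reduct of $\mathfrak D$ obtained by discarding diagonal elements and substitutions, a diagonal free cylindric algebra. An algebra is completely representable if there is an injective homomorphism into a product of set algebras of the appropriate type (for diagonal free algebras, with units of the form $\prod_{i<n}U_i$) preserving all existing suprema. *)

theory Defs
  imports "HOL-Library.FuncSet"
begin

text \<open>Dimension indices are the naturals below n; maps tau are
  the extensional functions in {0..<n} to {0..<n}.\<close>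

record 'a pea =
  pcar   :: "'a set"
  pjoin  :: "'a \<Rightarrow> 'a \<Rightarrow> 'a"
  pmeet  :: "'a \<Rightarrow> 'a \<Rightarrow> 'a"
  pcompl :: "'a \<Rightarrow> 'a"
  pzero  :: "'a"
  pone   :: "'a"
  pcyl   :: "nat set \<Rightarrow> 'a \<Rightarrow> 'a"
  pdiag  :: "nat \<Rightarrow> nat \<Rightarrow> 'a"
  psubst :: "(nat \<Rightarrow> nat) \<Rightarrow> 'a \<Rightarrow> 'a"

definition transf :: "nat \<Rightarrow> (nat \<Rightarrow> nat) set" where
  "transf n = ({0..<n} \<rightarrow>\<^sub>E {0..<n})"

definition boolean_algebra_on :: "'a pea \<Rightarrow> bool" where
  "boolean_algebra_on A \<longleftrightarrow>
    pzero A \<in> pcar A \<and> pone A \<in> pcar A \<and>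
    (\<forall>x\<in>pcar A. \<forall>y\<in>pcar A. pjoin A x y \<in> pcar A \<and> pmeet A x y \<in> pcar A) \<and>
    (\<forall>x\<in>pcar A. pcompl A x \<in> pcar A) \<and>
    (\<forall>x\<in>pcar A. \<forall>y\<in>pcar A.
        pjoin A x y = pjoin A y x \<and> pmeet A x y = pmeet A y x \<and>
        pjoin A x (pmeet A x y) = x \<and> pmeet A x (pjoin A x y) = x) \<and>
    (\<forall>x\<in>pcar A. \<forall>y\<in>pcar A. \<forall>z\<in>pcar A.
        pjoin A x (pjoin A y z) = pjoin A (pjoin A x y) z \<and>
        pmeet A x (pmeet A y z) = pmeet A (pmeet A x y) z \<and>
        pmeet A x (pjoin A y z) = pjoin A (pmeet A x y) (pmeet A x z)) \<and>
    (\<forall>x\<in>pcar A. pjoin A x (pzero A) = x \<and> pmeet A x (pone A) = x \<and>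
        pjoin A x (pcompl A x) = pone A \<and> pmeet A x (pcompl A x) = pzero A)"

definition ple :: "'a pea \<Rightarrow> 'a \<Rightarrow> 'a \<Rightarrow> bool" where
  "ple A x y \<longleftrightarrow> pmeet A x y = x"

definition PEA :: "nat \<Rightarrow> 'a pea \<Rightarrow> bool" where
  "PEA n A \<longleftrightarrow> boolean_algebra_on A \<and>
    (\<forall>\<Gamma>\<subseteq>{0..<n}. \<forall>x\<in>pcar A. pcyl A \<Gamma> x \<in> pcar A) \<and>
    (\<forall>i<n. \<forall>j<n. pdiag A i j \<in> pcar A) \<and>
    (\<forall>\<tau>\<in>transf n. \<forall>x\<in>pcar A. psubst A \<tau> x \<in> pcar A) \<and>
    (\<forall>\<Gamma>\<subseteq>{0..<n}. pcyl A \<Gamma> (pzero A) = pzero A) \<and>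
    (\<forall>\<Gamma>\<subseteq>{0..<n}. \<forall>x\<in>pcar A. pjoin A x (pcyl A \<Gamma> x) = pcyl A \<Gamma> x) \<and>
    (\<forall>\<Gamma>\<subseteq>{0..<n}. \<forall>x\<in>pcar A. \<forall>y\<in>pcar A.
        pcyl A \<Gamma> (pmeet A x (pcyl A \<Gamma> y)) = pmeet A (pcyl A \<Gamma> x) (pcyl A \<Gamma> y)) \<and>
    (\<forall>x\<in>pcar A. pcyl A {} x = x) \<and>
    (\<forall>\<Gamma>\<subseteq>{0..<n}. \<forall>\<Delta>\<subseteq>{0..<n}. \<forall>x\<in>pcar A.
        pcyl A (\<Gamma> \<union> \<Delta>) x = pcyl A \<Gamma> (pcyl A \<Delta> x)) \<and>
    (\<forall>\<tau>\<in>transf n. \<forall>x\<in>pcar A. \<forall>y\<in>pcar A.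
        psubst A \<tau> (pjoin A x y) = pjoin A (psubst A \<tau> x) (psubst A \<tau> y) \<and>
        psubst A \<tau> (pmeet A x y) = pmeet A (psubst A \<tau> x) (psubst A \<tau> y) \<and>
        psubst A \<tau> (pcompl A x) = pcompl A (psubst A \<tau> x) \<and>
        psubst A \<tau> (pzero A) = pzero A \<and> psubst A \<tau> (pone A) = pone A) \<and>
    (\<forall>x\<in>pcar A. psubst A (restrict id {0..<n}) x = x) \<and>
    (\<forall>\<sigma>\<in>transf n. \<forall>\<tau>\<in>transf n. \<forall>x\<in>pcar A.
        psubst A (restrict (\<sigma> \<circ> \<tau>) {0..<n}) x = psubst A \<sigma> (psubst A \<tau> x)) \<and>
    (\<forall>\<Gamma>\<subseteq>{0..<n}. \<forall>\<sigma>\<in>transf n. \<forall>\<tau>\<in>transf n. \<forall>x\<in>pcar A.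
        (\<forall>i\<in>{0..<n} - \<Gamma>. \<sigma> i = \<tau> i) \<longrightarrow>
        psubst A \<sigma> (pcyl A \<Gamma> x) = psubst A \<tau> (pcyl A \<Gamma> x)) \<and>
    (\<forall>\<Gamma>\<subseteq>{0..<n}. \<forall>\<tau>\<in>transf n. \<forall>x\<in>pcar A.
        inj_on \<tau> ({0..<n} \<inter> \<tau> -` \<Gamma>) \<longrightarrow>
        pcyl A \<Gamma> (psubst A \<tau> x) = psubst A \<tau> (pcyl A ({0..<n} \<inter> \<tau> -` \<Gamma>) x)) \<and>
    (\<forall>\<tau>\<in>transf n. \<forall>i<n. \<forall>j<n. psubst A \<tau> (pdiag A i j) = pdiag A (\<tau> i) (\<tau> j)) \<and>
    (\<forall>i<n. pdiag A i i = pone A) \<and>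
    (\<forall>i<n. \<forall>j<n. \<forall>x\<in>pcar A.
        ple A (pmeet A x (pdiag A i j)) (psubst A ((restrict id {0..<n})(j := i)) x))"

definition pc :: "'a pea \<Rightarrow> nat \<Rightarrow> 'a \<Rightarrow> 'a" where
  "pc A i x = pcyl A {i} x"

definition dimset :: "nat \<Rightarrow> 'a pea \<Rightarrow> 'a \<Rightarrow> nat set" where
  "dimset n A x = {i. i < n \<and> pc A i x \<noteq> x}"

definition pea_generated_by :: "nat \<Rightarrow> 'a pea \<Rightarrow> 'a set \<Rightarrow> bool" where
  "pea_generated_by n A G \<longleftrightarrow>
    (\<forall>S. G \<subseteq> S \<and> S \<subseteq> pcar A \<and>
         pzero A \<in> S \<and> pone A \<in> S \<and>
         (\<forall>x\<in>S. \<forall>y\<in>S. pjoin A x y \<in> S \<and> pmeet A x y \<in> S) \<and>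
         (\<forall>x\<in>S. pcompl A x \<in> S) \<and>
         (\<forall>\<Gamma>\<subseteq>{0..<n}. \<forall>x\<in>S. pcyl A \<Gamma> x \<in> S) \<and>
         (\<forall>i<n. \<forall>j<n. pdiag A i j \<in> S) \<and>
         (\<forall>\<tau>\<in>transf n. \<forall>x\<in>S. psubst A \<tau> x \<in> S)
       \<longrightarrow> pcar A \<subseteq> S)"

definition is_sup :: "'a pea \<Rightarrow> 'a set \<Rightarrow> 'a \<Rightarrow> bool" where
  "is_sup A X s \<longleftrightarrow> s \<in> pcar A \<and> (\<forall>x\<in>X. ple A x s) \<and>
     (\<forall>u\<in>pcar A. (\<forall>x\<in>X. ple A x u) \<longrightarrow> ple A s u)"

definition pea_set_hom :: "nat \<Rightarrow> 'a pea \<Rightarrow> 'b set \<Rightarrow> ('a \<Rightarrow> (nat \<Rightarrow> 'b) set) \<Rightarrow> bool" where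
  "pea_set_hom n A U h \<longleftrightarrow>
    (let V = ({0..<n} \<rightarrow>\<^sub>E U) in
    (\<forall>x\<in>pcar A. h x \<subseteq> V) \<and>
    h (pzero A) = {} \<and> h (pone A) = V \<and>
    (\<forall>x\<in>pcar A. \<forall>y\<in>pcar A. h (pjoin A x y) = h x \<union> h y \<and> h (pmeet A x y) = h x \<inter> h y) \<and>
    (\<forall>x\<in>pcar A. h (pcompl A x) = V - h x) \<and>
    (\<forall>\<Gamma>\<subseteq>{0..<n}. \<forall>x\<in>pcar A.
        h (pcyl A \<Gamma> x) = {s\<in>V. \<exists>t\<in>h x. \<forall>i\<in>{0..<n} - \<Gamma>. s i = t i}) \<and>
    (\<forall>i<n. \<forall>j<n. h (pdiag A i j) = {s\<in>V. s i = s j}) \<and>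
    (\<forall>\<tau>\<in>transf n. \<forall>x\<in>pcar A.
        h (psubst A \<tau> x) = {s\<in>V. (\<lambda>i\<in>{0..<n}. s (\<tau> i)) \<in> h x}))"

text \<open>Full diagonal-free set algebra with unit prod_{i<n} U_i: h is a homomorphism from
  the diagonal free reduct Rd_df A (Boolean operations and c_i, i<n) into it.\<close>
definition df_set_hom :: "nat \<Rightarrow> 'a pea \<Rightarrow> (nat \<Rightarrow> 'b set) \<Rightarrow> ('a \<Rightarrow> (nat \<Rightarrow> 'b) set) \<Rightarrow> bool" where
  "df_set_hom n A U h \<longleftrightarrow>
    (let V = Pi\<^sub>E {0..<n} U in
    (\<forall>x\<in>pcar A. h x \<subseteq> V) \<and>
    h (pzero A) = {} \<and> h (pone A) = V \<and>
    (\<forall>x\<in>pcar A. \<forall>y\<in>pcar A. h (pjoin A x y) = h x \<union> h y \<and> h (pmeet A x y) = h x \<inter> h y) \<and>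
    (\<forall>x\<in>pcar A. h (pcompl A x) = V - h x) \<and>
    (\<forall>i<n. \<forall>x\<in>pcar A.
        h (pc A i x) = {s\<in>V. \<exists>t\<in>h x. \<forall>j\<in>{0..<n}. j \<noteq> i \<longrightarrow> s j = t j}))"

text \<open>Complete representation: an injective homomorphism into a product (indexed by K)
  of set algebras, preserving all existing suprema (suprema in the product are
  componentwise unions).\<close>
definition complete_rep_family :: "'a pea \<Rightarrow> 'k set \<Rightarrow> ('k \<Rightarrow> 'a \<Rightarrow> (nat \<Rightarrow> 'b) set) \<Rightarrow> bool" where
  "complete_rep_family A K h \<longleftrightarrow>
    (\<forall>x\<in>pcar A. \<forall>y\<in>pcar A. (\<forall>k\<in>K. h k x = h k y) \<longrightarrow> x = y) \<and>
    (\<forall>X s. X \<subseteq> pcar A \<longrightarrow> is_sup A X s \<longrightarrow> (\<forall>k\<in>K. h k s = (\<Union>x\<in>X. h k x)))"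

definition pea_completely_representable ::
    "nat \<Rightarrow> 'a pea \<Rightarrow> 'k itself \<Rightarrow> 'b itself \<Rightarrow> bool" where
  "pea_completely_representable n A _ _ \<longleftrightarrow>
    (\<exists>(K::'k set) (U::'k \<Rightarrow> 'b set) h.
        (\<forall>k\<in>K. pea_set_hom n A (U k) (h k)) \<and> complete_rep_family A K h)"

definition df_completely_representable ::
    "nat \<Rightarrow> 'a pea \<Rightarrow> 'k itself \<Rightarrow> 'b itself \<Rightarrow> bool" where
  "df_completely_representable n A _ _ \<longleftrightarrow>
    (\<exists>(K::'k set) (U::'k \<Rightarrow> nat \<Rightarrow> 'b set) h.
        (\<forall>k\<in>K. df_set_hom n A (U k) (h k)) \<and> complete_rep_family A K h)"

end

theory Submission
  imports Defs "HOL-Combinatorics.Permutations"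
begin

(* A complete representation of the diagonal-free reduct provides, for every nonzero element z,
  a homomorphism h with h z nonempty into a set algebra with unit prod_{i<n} U_i, preserving all
  suprema. Call two values of U_i indistinguishable if swapping them in coordinate i never changes
  membership in any h x. Because D is generated by elements x with c_k x = x for some k, an
  induction over this generating set shows that h (d_0i) relates the values of coordinate 0 and
  coordinate i bijectively up to indistinguishability. Hence all coordinates can be identified with
  the indistinguishability classes of U_0, which gives a homomorphism into a set algebra with a
  common base that also respects the diagonals.

  Substitutions then come for free. By axiom (E3) a replacement [j->i] is expressible through the
  diagonal d_ij and the cylindrification c_j, every non-injective transformation is a composite
  of replacements, and on a generator x with c_k x = x an arbitrary substitution agrees with a
  non-injective one. A Loewenheim-Skolem argument finally shrinks the base to a subset of the
  witnesses for cylindrifications, which injects into D x nat; one such representation for every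
  nonzero z gives the complete representation. *)

section \<open>Transformations and replacements\<close>

definition replace :: "nat \<Rightarrow> nat \<Rightarrow> nat \<Rightarrow> nat \<Rightarrow> nat" where
  "replace n j i = (restrict id {0..<n})(j := i)"

lemma replace_apply: "l < n \<Longrightarrow> replace n j i l = (if l = j then i else l)"
  unfolding replace_def by simp

lemma replace_transf: "j < n \<Longrightarrow> i < n \<Longrightarrow> replace n j i \<in> transf n"
  unfolding replace_def transf_def by (auto simp: PiE_def extensional_def)

lemma transf_less: "\<tau> \<in> transf n \<Longrightarrow> i < n \<Longrightarrow> \<tau> i < n"
  unfolding transf_def by auto

lemma transf_eqI: "\<sigma> \<in> transf n \<Longrightarrow> \<tau> \<in> transf n \<Longrightarrow> (\<And>l. l < n \<Longrightarrow> \<sigma> l = \<tau> l) \<Longrightarrow> \<sigma> = \<tau>"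
  unfolding transf_def by (rule extensionalityI[of _ "{0..<n}"]) (auto simp: PiE_def)

lemma transf_upd: "\<tau> \<in> transf n \<Longrightarrow> j < n \<Longrightarrow> i < n \<Longrightarrow> \<tau>(j := i) \<in> transf n"
  unfolding transf_def by (auto simp: PiE_def Pi_def extensional_def)

lemma transf_comp: "\<sigma> \<in> transf n \<Longrightarrow> \<tau> \<in> transf n \<Longrightarrow> restrict (\<sigma> \<circ> \<tau>) {0..<n} \<in> transf n"
  unfolding transf_def by (auto simp: PiE_def Pi_def extensional_def)

lemma transf_id: "restrict id {0..<n} \<in> transf n"
  unfolding transf_def by auto

lemma inj_transf_permutes:
  assumes "\<tau> \<in> transf n" "inj_on \<tau> {0..<n}"
  shows "(\<lambda>l. if l < n then \<tau> l else l) permutes {0..<n}"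
proof (rule bij_imp_permutes)
  let ?p = "\<lambda>l. if l < n then \<tau> l else l"
  have inj: "inj_on ?p {0..<n}" using assms(2) by (auto simp: inj_on_def)
  moreover have "?p ` {0..<n} \<subseteq> {0..<n}" using transf_less[OF assms(1)] by auto
  ultimately have "?p ` {0..<n} = {0..<n}" using endo_inj_surj[of "{0..<n}" ?p] by blast
  then show "bij_betw ?p {0..<n} {0..<n}" using inj unfolding bij_betw_def by blast
qed simp

locale replacement_closed =
  fixes n :: nat and M :: "(nat \<Rightarrow> nat) set"
  assumes comp_closed: "\<And>\<sigma> \<tau>. \<sigma> \<in> M \<Longrightarrow> \<tau> \<in> M \<Longrightarrow> restrict (\<sigma> \<circ> \<tau>) {0..<n} \<in> M"
    and replace_mem: "\<And>i j. i < n \<Longrightarrow> j < n \<Longrightarrow> i \<noteq> j \<Longrightarrow> replace n j i \<in> M"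
begin

lemma replace_transpose_factor:
  assumes "a < n" "b < n" "m < n" "c < n" "a \<noteq> b" "m \<noteq> c" "{a, b} \<noteq> {m, c}"
  shows "\<exists>A\<in>M. \<exists>m' c'. m' < n \<and> c' < n \<and> m' \<noteq> c' \<and>
           (\<forall>l<n. replace n m c (transpose a b l) = A (replace n m' c' l))"
proof -
  \<comment> \<open>Writing [m->c] for replace n m c, the cases below are the identities
    [m->c] (m b) = [m->b] [b->c],  [m->c] (c b) = [m->c] [c->b] [b->m]  and
    [m->c] (a b) = [m->a] [a->b] [b->m] [m->c]  for a, b outside {m, c}:
    the coordinate m, which [m->c] forgets, serves as scratch space for the swap.\<close>
  have factor: "\<exists>A\<in>M. \<exists>m' c'. m' < n \<and> c' < n \<and> m' \<noteq> c' \<and>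
           (\<forall>l<n. replace n m c (transpose a b l) = A (replace n m' c' l))"
    if "a < n" "b < n" "a \<noteq> b" "{a, b} \<noteq> {m, c}" "b \<noteq> m" "b \<noteq> c" for a b
  proof -
    consider "a = m" | "a = c" | "a \<noteq> m" "a \<noteq> c" by blast
    then show ?thesis
    proof cases
      case 1
      show ?thesis
        by (rule bexI[of _ "replace n m b"], rule exI[of _ b], rule exI[of _ c])
           (use that 1 assms in \<open>auto simp: replace_apply transpose_def intro: replace_mem\<close>)
    next
      case 2
      show ?thesis
        by (rule bexI[of _ "restrict (replace n m c \<circ> replace n c b) {0..<n}"],
            rule exI[of _ b], rule exI[of _ m])
           (use that 2 assms in \<open>auto simp: replace_apply transpose_def intro!: comp_closed replace_mem\<close>)
    next
      case 3
      show ?thesis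
        by (rule bexI[of _ "restrict (replace n m a \<circ> restrict (replace n a b \<circ> replace n b m) {0..<n}) {0..<n}"],
            rule exI[of _ m], rule exI[of _ c])
           (use that 3 assms in \<open>auto simp: replace_apply transpose_def intro!: comp_closed replace_mem\<close>)
    qed
  qed
  show ?thesis
  proof (cases "b \<in> {m, c}")
    case True
    then have "a \<notin> {m, c}" using assms by auto
    then show ?thesis
      using factor[of b a] assms by (simp add: transpose_commute insert_commute)
  qed (use factor assms in auto)
qed

lemma replace_comp_permutes_mem:
  assumes "p permutes {0..<n}" "m < n" "c < n" "m \<noteq> c"
  shows "restrict (replace n m c \<circ> p) {0..<n} \<in> M"
  using assms(1) finite_atLeastLessThan assms(2-4)
proof (induction p arbitrary: m c rule: permutes_induct)
  case id
  have "restrict (replace n m c \<circ> id) {0..<n} = replace n m c"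
    using id.prems by (auto simp: replace_def)
  then show ?case using replace_mem id.prems by simp
next
  case (swap a b p)
  have p_less: "p l < n" if "l < n" for l
    using permutes_in_image[OF swap.hyps(4)] that by simp
  show ?case
  proof (cases "{a, b} = {m, c}")
    case True
    have "replace n m c (transpose a b v) = replace n m c v" if "v < n" for v
      using True that swap.prems by (auto simp: replace_apply transpose_def doubleton_eq_iff)
    then have "restrict (replace n m c \<circ> (transpose a b \<circ> p)) {0..<n} = restrict (replace n m c \<circ> p) {0..<n}"
      using p_less by (intro restrict_ext) simp
    then show ?thesis using swap.IH[OF swap.prems] by (simp only:)
  next
    case False
    obtain A m' c' where A: "A \<in> M" "m' < n" "c' < n" "m' \<noteq> c'"
      and factor: "\<And>l. l < n \<Longrightarrow> replace n m c (transpose a b l) = A (replace n m' c' l)"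
      using replace_transpose_factor[OF _ _ swap.prems(1,2) swap.hyps(3) swap.prems(3) False] swap.hyps(1,2)
      by auto
    have "restrict (replace n m c \<circ> (transpose a b \<circ> p)) {0..<n}
        = restrict (A \<circ> restrict (replace n m' c' \<circ> p) {0..<n}) {0..<n}"
      using factor p_less by auto
    then show ?thesis using comp_closed[OF A(1) swap.IH[OF A(2-4)]] by (simp only:)
  qed
qed

lemma noninjective_mem:
  assumes "\<tau> \<in> transf n" "\<not> inj_on \<tau> {0..<n}"
  shows "\<tau> \<in> M"
  using assms
proof (induction "card {l \<in> {0..<n}. \<tau> l \<noteq> l}" arbitrary: \<tau> rule: less_induct)
  case less
  \<comment> \<open>For m outside the range of \<tau>, \<tau> = [m->\<tau> m] \<circ> \<tau>(m := m), and \<tau>(m := m) is either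
    a permutation or non-injective with fewer moved points.\<close>
  have "\<not> {0..<n} \<subseteq> \<tau> ` {0..<n}" using finite_surj_inj less.prems(2) by blast
  then obtain m where "m \<in> {0..<n} - \<tau> ` {0..<n}" by blast
  then have m: "m < n" "m \<notin> \<tau> ` {0..<n}" by auto
  define c where "c = \<tau> m"
  have c: "c < n" "c \<noteq> m" using m transf_less[OF less.prems(1)] unfolding c_def by force+
  define \<tau>' where "\<tau>' = \<tau>(m := m)"
  have \<tau>': "\<tau>' \<in> transf n" unfolding \<tau>'_def using transf_upd[OF less.prems(1) m(1) m(1)] .
  have \<tau>_eq: "\<tau> = restrict (replace n m c \<circ> \<tau>') {0..<n}"
    by (rule transf_eqI[OF less.prems(1) transf_comp[OF replace_transf[OF m(1) c(1)] \<tau>']])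
       (use m in \<open>auto simp: \<tau>'_def c_def replace_apply transf_less[OF less.prems(1)]\<close>)
  show ?case
  proof (cases "inj_on \<tau>' {0..<n}")
    case True
    let ?p = "\<lambda>l. if l < n then \<tau>' l else l"
    have "restrict (replace n m c \<circ> ?p) {0..<n} = restrict (replace n m c \<circ> \<tau>') {0..<n}"
      by auto
    then show ?thesis
      using replace_comp_permutes_mem[OF inj_transf_permutes[OF \<tau>' True] m(1) c(1) not_sym[OF c(2)]] \<tau>_eq
      by simp
  next
    case False
    have "{l \<in> {0..<n}. \<tau>' l \<noteq> l} = {l \<in> {0..<n}. \<tau> l \<noteq> l} - {m}"
      by (auto simp: \<tau>'_def)
    moreover have "card ({l \<in> {0..<n}. \<tau> l \<noteq> l} - {m}) < card {l \<in> {0..<n}. \<tau> l \<noteq> l}"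
      by (rule card_Diff1_less) (use m c c_def in auto)
    ultimately have "card {l \<in> {0..<n}. \<tau>' l \<noteq> l} < card {l \<in> {0..<n}. \<tau> l \<noteq> l}"
      by simp
    then have "\<tau>' \<in> M" using less.hyps \<tau>' False by blast
    then show ?thesis using comp_closed[OF replace_mem[OF c(1) m(1) c(2)]] \<tau>_eq by simp
  qed
qed

end

section \<open>Set homomorphisms\<close>

definition cyl_set_hom :: "nat \<Rightarrow> 'a pea \<Rightarrow> 'c set \<Rightarrow> ('a \<Rightarrow> (nat \<Rightarrow> 'c) set) \<Rightarrow> bool" where
  "cyl_set_hom n A B f \<longleftrightarrow> df_set_hom n A (\<lambda>_. B) f \<and>
     (\<forall>i<n. \<forall>j<n. f (pdiag A i j) = {s \<in> {0..<n} \<rightarrow>\<^sub>E B. s i = s j})"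

lemma
  assumes "cyl_set_hom n A B f"
  shows cyl_set_hom_df: "df_set_hom n A (\<lambda>_. B) f"
    and cyl_set_hom_diag: "i < n \<Longrightarrow> j < n \<Longrightarrow> f (pdiag A i j) = {s \<in> {0..<n} \<rightarrow>\<^sub>E B. s i = s j}"
  using assms unfolding cyl_set_hom_def by blast+

lemma df_set_hom_if_pea_set_hom:
  assumes "pea_set_hom n A B f"
  shows "df_set_hom n A (\<lambda>_. B) f"
proof -
  have agree_iff: "(\<forall>l\<in>{0..<n} - {i}. s l = t l) \<longleftrightarrow> (\<forall>j\<in>{0..<n}. j \<noteq> i \<longrightarrow> s j = t j)"
    for i and s t :: "nat \<Rightarrow> 'b"
    by blast
  have "f (pcyl A {i} x) = {s \<in> {0..<n} \<rightarrow>\<^sub>E B. \<exists>t\<in>f x. \<forall>l\<in>{0..<n} - {i}. s l = t l}"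
    if "i < n" "x \<in> pcar A" for i x
    using assms that unfolding pea_set_hom_def Let_def by simp
  then show ?thesis
    using assms unfolding pea_set_hom_def df_set_hom_def Let_def pc_def agree_iff by simp
qed

lemma PiE_upd: "s \<in> Pi\<^sub>E I A \<Longrightarrow> k \<in> I \<Longrightarrow> u \<in> A k \<Longrightarrow> s(k := u) \<in> Pi\<^sub>E I A"
  using PiE_fun_upd[of u A k s I] by (simp add: insert_absorb)

context
  fixes n :: nat and A :: "'a pea" and U :: "nat \<Rightarrow> 'b set" and h :: "'a \<Rightarrow> (nat \<Rightarrow> 'b) set"
  assumes hom: "df_set_hom n A U h"
begin

lemma
  shows df_set_hom_subset: "x \<in> pcar A \<Longrightarrow> h x \<subseteq> Pi\<^sub>E {0..<n} U"
    and df_set_hom_zero: "h (pzero A) = {}"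
    and df_set_hom_one: "h (pone A) = Pi\<^sub>E {0..<n} U"
    and df_set_hom_join: "x \<in> pcar A \<Longrightarrow> y \<in> pcar A \<Longrightarrow> h (pjoin A x y) = h x \<union> h y"
    and df_set_hom_meet: "x \<in> pcar A \<Longrightarrow> y \<in> pcar A \<Longrightarrow> h (pmeet A x y) = h x \<inter> h y"
    and df_set_hom_compl: "x \<in> pcar A \<Longrightarrow> h (pcompl A x) = Pi\<^sub>E {0..<n} U - h x"
    and df_set_hom_cyl: "k < n \<Longrightarrow> x \<in> pcar A \<Longrightarrow>
          h (pcyl A {k} x) = {s \<in> Pi\<^sub>E {0..<n} U. \<exists>t\<in>h x. \<forall>j<n. j \<noteq> k \<longrightarrow> s j = t j}"
  using hom unfolding df_set_hom_def Let_def pc_def by auto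

lemma df_set_hom_mono: "ple A x y \<Longrightarrow> x \<in> pcar A \<Longrightarrow> y \<in> pcar A \<Longrightarrow> h x \<subseteq> h y"
  unfolding ple_def by (metis df_set_hom_meet inf.cobounded2)

lemma df_set_hom_cyl_fixed:
  assumes "x \<in> pcar A" "k < n" "pcyl A {k} x = x" "s \<in> h x" "t \<in> Pi\<^sub>E {0..<n} U"
    and "\<And>j. j < n \<Longrightarrow> j \<noteq> k \<Longrightarrow> t j = s j"
  shows "t \<in> h x"
  using df_set_hom_cyl[OF assms(2,1)] assms(3-6) by auto

end

definition set_subst :: "nat \<Rightarrow> 'c set \<Rightarrow> (nat \<Rightarrow> nat) \<Rightarrow> (nat \<Rightarrow> 'c) set \<Rightarrow> (nat \<Rightarrow> 'c) set" where
  "set_subst n B \<tau> X = {s \<in> {0..<n} \<rightarrow>\<^sub>E B. (\<lambda>i\<in>{0..<n}. s (\<tau> i)) \<in> X}"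

lemma PiE_comp_transf: "\<tau> \<in> transf n \<Longrightarrow> s \<in> {0..<n} \<rightarrow>\<^sub>E B \<Longrightarrow> (\<lambda>i\<in>{0..<n}. s (\<tau> i)) \<in> {0..<n} \<rightarrow>\<^sub>E B"
  using transf_less by (auto simp: PiE_def Pi_def)

lemma set_subst_comp:
  assumes "\<sigma> \<in> transf n" "\<tau> \<in> transf n"
  shows "set_subst n B \<sigma> (set_subst n B \<tau> X) = set_subst n B (restrict (\<sigma> \<circ> \<tau>) {0..<n}) X"
proof (intro set_eqI)
  fix s :: "nat \<Rightarrow> 'a"
  have "(\<lambda>l\<in>{0..<n}. (\<lambda>i\<in>{0..<n}. s (\<sigma> i)) (\<tau> l)) = (\<lambda>i\<in>{0..<n}. s (restrict (\<sigma> \<circ> \<tau>) {0..<n} i))"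
    using transf_less[OF assms(2)] by (auto intro!: restrict_ext)
  then show "s \<in> set_subst n B \<sigma> (set_subst n B \<tau> X) \<longleftrightarrow> s \<in> set_subst n B (restrict (\<sigma> \<circ> \<tau>) {0..<n}) X"
    unfolding set_subst_def mem_Collect_eq using PiE_comp_transf[OF assms(1)] by metis
qed

lemma set_subst_compl:
  "\<tau> \<in> transf n \<Longrightarrow> set_subst n B \<tau> (({0..<n} \<rightarrow>\<^sub>E B) - X) = ({0..<n} \<rightarrow>\<^sub>E B) - set_subst n B \<tau> X"
  unfolding set_subst_def using PiE_comp_transf by blast

section \<open>Polyadic equality algebras\<close>

locale pea_algebra =
  fixes n :: nat and D :: "'a pea"
  assumes PEA: "PEA n D"
begin

abbreviation "car \<equiv> pcar D"
abbreviation "join \<equiv> pjoin D"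
abbreviation "meet \<equiv> pmeet D"
abbreviation "compl \<equiv> pcompl D"
abbreviation "cyl \<equiv> pcyl D"
abbreviation "diag \<equiv> pdiag D"
abbreviation "subst \<equiv> psubst D"

lemma
  shows zero_car: "pzero D \<in> car"
    and one_car: "pone D \<in> car"
    and join_meet_car [rule_format]: "\<forall>x\<in>car. \<forall>y\<in>car. join x y \<in> car \<and> meet x y \<in> car"
    and compl_car [rule_format]: "\<forall>x\<in>car. compl x \<in> car"
  by (insert PEA, unfold PEA_def boolean_algebra_on_def, elim conjE, assumption)+

lemma
  shows cyl_car [rule_format]: "\<forall>\<Gamma>\<subseteq>{0..<n}. \<forall>x\<in>car. cyl \<Gamma> x \<in> car"
    and diag_car [rule_format]: "\<forall>i<n. \<forall>j<n. diag i j \<in> car"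
    and subst_car [rule_format]: "\<forall>\<tau>\<in>transf n. \<forall>x\<in>car. subst \<tau> x \<in> car"
    and cyl_zero [rule_format]: "\<forall>\<Gamma>\<subseteq>{0..<n}. cyl \<Gamma> (pzero D) = pzero D"
    and cyl_ext [rule_format]: "\<forall>\<Gamma>\<subseteq>{0..<n}. \<forall>x\<in>car. join x (cyl \<Gamma> x) = cyl \<Gamma> x"
    and cyl_empty [rule_format]: "\<forall>x\<in>car. cyl {} x = x"
    and cyl_union [rule_format]: "\<forall>\<Gamma>\<subseteq>{0..<n}. \<forall>\<Delta>\<subseteq>{0..<n}. \<forall>x\<in>car.
        cyl (\<Gamma> \<union> \<Delta>) x = cyl \<Gamma> (cyl \<Delta> x)"
    and subst_boolean [rule_format]: "\<forall>\<tau>\<in>transf n. \<forall>x\<in>car. \<forall>y\<in>car.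
        subst \<tau> (join x y) = join (subst \<tau> x) (subst \<tau> y) \<and>
        subst \<tau> (meet x y) = meet (subst \<tau> x) (subst \<tau> y) \<and>
        subst \<tau> (compl x) = compl (subst \<tau> x) \<and>
        subst \<tau> (pzero D) = pzero D \<and> subst \<tau> (pone D) = pone D"
    and subst_id [rule_format]: "\<forall>x\<in>car. subst (restrict id {0..<n}) x = x"
    and subst_comp [rule_format]: "\<forall>\<sigma>\<in>transf n. \<forall>\<tau>\<in>transf n. \<forall>x\<in>car.
        subst (restrict (\<sigma> \<circ> \<tau>) {0..<n}) x = subst \<sigma> (subst \<tau> x)"
    and subst_cyl_cong [rule_format]: "\<forall>\<Gamma>\<subseteq>{0..<n}. \<forall>\<sigma>\<in>transf n. \<forall>\<tau>\<in>transf n. \<forall>x\<in>car.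
        (\<forall>i\<in>{0..<n} - \<Gamma>. \<sigma> i = \<tau> i) \<longrightarrow> subst \<sigma> (cyl \<Gamma> x) = subst \<tau> (cyl \<Gamma> x)"
    and cyl_subst [rule_format]: "\<forall>\<Gamma>\<subseteq>{0..<n}. \<forall>\<tau>\<in>transf n. \<forall>x\<in>car.
        inj_on \<tau> ({0..<n} \<inter> \<tau> -` \<Gamma>) \<longrightarrow>
        cyl \<Gamma> (subst \<tau> x) = subst \<tau> (cyl ({0..<n} \<inter> \<tau> -` \<Gamma>) x)"
    and subst_diag [rule_format]: "\<forall>\<tau>\<in>transf n. \<forall>i<n. \<forall>j<n. subst \<tau> (diag i j) = diag (\<tau> i) (\<tau> j)"
    and diag_refl [rule_format]: "\<forall>i<n. diag i i = pone D"
    and diag_meet_le_subst [rule_format]: "\<forall>i<n. \<forall>j<n. \<forall>x\<in>car.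
        ple D (meet x (diag i j)) (subst (replace n j i) x)"
  by (insert PEA, unfold PEA_def replace_def, elim conjE, assumption)+

lemma
  shows join_car: "x \<in> car \<Longrightarrow> y \<in> car \<Longrightarrow> join x y \<in> car"
    and meet_car: "x \<in> car \<Longrightarrow> y \<in> car \<Longrightarrow> meet x y \<in> car"
  using join_meet_car by blast+

lemma
  assumes "\<tau> \<in> transf n" "x \<in> car"
  shows subst_join: "y \<in> car \<Longrightarrow> subst \<tau> (join x y) = join (subst \<tau> x) (subst \<tau> y)"
    and subst_meet: "y \<in> car \<Longrightarrow> subst \<tau> (meet x y) = meet (subst \<tau> x) (subst \<tau> y)"
    and subst_compl: "subst \<tau> (compl x) = compl (subst \<tau> x)"
  using subst_boolean[OF assms] zero_car by blast+

lemma cyl_subst_outside_range: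
  assumes "\<tau> \<in> transf n" "x \<in> car" "k < n" "k \<notin> \<tau> ` {0..<n}"
  shows "cyl {k} (subst \<tau> x) = subst \<tau> x"
proof -
  have "{0..<n} \<inter> \<tau> -` {k} = {}" using assms(4) by auto
  then show ?thesis using cyl_subst[of "{k}" \<tau> x] cyl_empty assms by auto
qed

lemma diag_cyl_other:
  assumes "i < n" "j < n" "k < n" "k \<noteq> i" "k \<noteq> j"
  shows "cyl {k} (diag i j) = diag i j"
proof -
  let ?\<tau> = "replace n k i"
  have \<tau>: "?\<tau> \<in> transf n" using replace_transf assms by auto
  have "subst ?\<tau> (diag i j) = diag i j" using subst_diag[OF \<tau> assms(1,2)] assms by (simp add: replace_apply)
  moreover have "k \<notin> ?\<tau> ` {0..<n}" using assms by (auto simp: replace_apply)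
  ultimately show ?thesis
    using cyl_subst_outside_range[OF \<tau> diag_car[OF assms(1,2)] assms(3)] by simp
qed

lemma cyl_fixed_set:
  assumes "\<Gamma> \<subseteq> {0..<n}" "x \<in> car" "\<And>k. k \<in> \<Gamma> \<Longrightarrow> cyl {k} x = x"
  shows "cyl \<Gamma> x = x"
proof -
  have "finite \<Gamma>" using assms(1) finite_subset by blast
  then show ?thesis using assms
  proof (induction \<Gamma> rule: finite_induct)
    case empty
    then show ?case using cyl_empty by simp
  next
    case (insert k \<Gamma>)
    then have "cyl (insert k \<Gamma>) x = cyl {k} (cyl \<Gamma> x)" using cyl_union[of "{k}" \<Gamma> x] by simp
    then show ?case using insert by simp
  qed
qed

context
  fixes U :: "nat \<Rightarrow> 'b set" and h :: "'a \<Rightarrow> (nat \<Rightarrow> 'b) set"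
  assumes hom: "df_set_hom n D U h"
begin

lemma df_set_hom_cyl_set:
  assumes "\<Gamma> \<subseteq> {0..<n}" "x \<in> car"
  shows "h (cyl \<Gamma> x) = {s \<in> Pi\<^sub>E {0..<n} U. \<exists>t\<in>h x. \<forall>i\<in>{0..<n} - \<Gamma>. s i = t i}"
proof -
  have "finite \<Gamma>" using assms(1) finite_subset by blast
  then show ?thesis using assms(1)
  proof (induction \<Gamma> rule: finite_induct)
    case empty
    have "h x = {s \<in> Pi\<^sub>E {0..<n} U. \<exists>t\<in>h x. \<forall>i\<in>{0..<n}. s i = t i}"
    proof (intro set_eqI iffI)
      fix s assume "s \<in> {s \<in> Pi\<^sub>E {0..<n} U. \<exists>t\<in>h x. \<forall>i\<in>{0..<n}. s i = t i}"
      then obtain t where "s \<in> Pi\<^sub>E {0..<n} U" "t \<in> h x" "\<forall>i\<in>{0..<n}. s i = t i" by blast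
      moreover have "t \<in> Pi\<^sub>E {0..<n} U" using \<open>t \<in> h x\<close> df_set_hom_subset[OF hom assms(2)] by blast
      ultimately show "s \<in> h x" using PiE_ext[of s "{0..<n}" U t] by auto
    qed (use df_set_hom_subset[OF hom assms(2)] in auto)
    then show ?case using cyl_empty[OF assms(2)] by simp
  next
    case (insert k \<Gamma>)
    then have k: "k < n" and \<Gamma>: "\<Gamma> \<subseteq> {0..<n}" by auto
    have "h (cyl (insert k \<Gamma>) x) = h (cyl {k} (cyl \<Gamma> x))"
      using cyl_union[of "{k}" \<Gamma> x] k \<Gamma> assms(2) by simp
    also have "\<dots> = {s \<in> Pi\<^sub>E {0..<n} U. \<exists>t\<in>h (cyl \<Gamma> x). \<forall>j<n. j \<noteq> k \<longrightarrow> s j = t j}"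
      using df_set_hom_cyl[OF hom k cyl_car[OF \<Gamma> assms(2)]] .
    also have "\<dots> = {s \<in> Pi\<^sub>E {0..<n} U. \<exists>t\<in>h x. \<forall>i\<in>{0..<n} - insert k \<Gamma>. s i = t i}"
    proof (intro Collect_cong conj_cong refl iffI)
      fix s assume s: "s \<in> Pi\<^sub>E {0..<n} U" and "\<exists>t\<in>h x. \<forall>i\<in>{0..<n} - insert k \<Gamma>. s i = t i"
      then obtain t where t: "t \<in> h x" "\<forall>i\<in>{0..<n} - insert k \<Gamma>. s i = t i" by blast
      have "t \<in> Pi\<^sub>E {0..<n} U" using t(1) df_set_hom_subset[OF hom assms(2)] by blast
      then have "s(k := t k) \<in> Pi\<^sub>E {0..<n} U" using s k by (simp add: PiE_upd PiE_mem)
      then have "s(k := t k) \<in> h (cyl \<Gamma> x)" unfolding insert.IH[OF \<Gamma>] using t by auto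
      then show "\<exists>t\<in>h (cyl \<Gamma> x). \<forall>j<n. j \<noteq> k \<longrightarrow> s j = t j" by (intro bexI[of _ "s(k := t k)"]) auto
    next
      fix s assume "\<exists>t\<in>h (cyl \<Gamma> x). \<forall>j<n. j \<noteq> k \<longrightarrow> s j = t j"
      then obtain t' where t': "t' \<in> h (cyl \<Gamma> x)" "\<forall>j<n. j \<noteq> k \<longrightarrow> s j = t' j" by blast
      then obtain t where "t \<in> h x" "\<forall>i\<in>{0..<n} - \<Gamma>. t' i = t i" unfolding insert.IH[OF \<Gamma>] by blast
      then show "\<exists>t\<in>h x. \<forall>i\<in>{0..<n} - insert k \<Gamma>. s i = t i" using t'(2) by auto
    qed
    finally show ?case .
  qed
qed

lemma
  assumes "i < n" "j < n" "x \<in> car"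
  shows df_set_hom_meet_diag_le_subst: "h x \<inter> h (diag i j) \<subseteq> h (subst (replace n j i) x)"
    and df_set_hom_subst_meet_diag_le: "h (subst (replace n j i) x) \<inter> h (diag i j) \<subseteq> h x"
proof -
  have \<tau>: "replace n j i \<in> transf n" using replace_transf assms by auto
  have le: "h y \<inter> h (diag i j) \<subseteq> h (subst (replace n j i) y)" if "y \<in> car" for y
    using df_set_hom_mono[OF hom diag_meet_le_subst[OF assms(1,2) that]] that
      df_set_hom_meet[OF hom that] meet_car diag_car[OF assms(1,2)] subst_car[OF \<tau>] by simp
  show "h x \<inter> h (diag i j) \<subseteq> h (subst (replace n j i) x)" using le[OF assms(3)] .
  have "h (compl x) \<inter> h (diag i j) \<subseteq> h (compl (subst (replace n j i) x))"
    using le[OF compl_car[OF assms(3)]] subst_compl[OF \<tau> assms(3)] by simp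
  then show "h (subst (replace n j i) x) \<inter> h (diag i j) \<subseteq> h x"
    using df_set_hom_compl[OF hom] df_set_hom_subset[OF hom] subst_car[OF \<tau> assms(3)] assms(3)
      diag_car[OF assms(1,2)] by blast
qed

end

lemma df_set_hom_diff:
  assumes "df_set_hom n D U h" "x \<in> car" "y \<in> car"
  shows "h (meet x (compl y)) = h x - h y"
  using df_set_hom_meet[OF assms(1,2) compl_car[OF assms(3)]] df_set_hom_compl[OF assms(1,3)]
    df_set_hom_subset[OF assms(1,2)] by blast

definition nonfull :: "'a set" where
  "nonfull = {x \<in> car. dimset n D x \<noteq> {0..<n}}"

lemma nonfull_iff: "x \<in> nonfull \<longleftrightarrow> x \<in> car \<and> (\<exists>k<n. cyl {k} x = x)"
proof -
  have "dimset n D x \<subseteq> {0..<n}" unfolding dimset_def by auto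
  then have "dimset n D x \<noteq> {0..<n} \<longleftrightarrow> (\<exists>k<n. k \<notin> dimset n D x)" by auto
  then show ?thesis unfolding nonfull_def by (auto simp: dimset_def pc_def)
qed

lemma cyl_nonfull:
  assumes "\<Gamma> \<subseteq> {0..<n}" "\<Gamma> \<noteq> {}" "x \<in> car"
  shows "cyl \<Gamma> x \<in> nonfull"
proof -
  obtain k where k: "k \<in> \<Gamma>" using assms(2) by blast
  then have "k < n" using assms(1) by auto
  then have "cyl {k} (cyl \<Gamma> x) = cyl \<Gamma> x"
    using cyl_union[of "{k}" \<Gamma> x] k assms by (simp add: insert_absorb)
  then show ?thesis unfolding nonfull_iff using \<open>k < n\<close> assms cyl_car by auto
qed

lemma subst_nonfull:
  assumes \<tau>: "\<tau> \<in> transf n" and x: "x \<in> nonfull"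
  shows "subst \<tau> x \<in> nonfull"
proof -
  obtain k where k: "k < n" "cyl {k} x = x" and x_car: "x \<in> car" using x unfolding nonfull_iff by auto
  show ?thesis
  proof (cases "\<tau> ` {0..<n} = {0..<n}")
    case True
    then have "inj_on \<tau> {0..<n}" by (simp add: eq_card_imp_inj_on)
    then have "{0..<n} \<inter> \<tau> -` {\<tau> k} = {k}" using k(1) by (auto simp: inj_on_def)
    then have "cyl {\<tau> k} (subst \<tau> x) = subst \<tau> (cyl {k} x)"
      using cyl_subst[of "{\<tau> k}" \<tau> x] transf_less[OF \<tau> k(1)] \<tau> x_car by auto
    then show ?thesis unfolding nonfull_iff using k transf_less[OF \<tau> k(1)] subst_car[OF \<tau> x_car] by auto
  next
    case False
    moreover have "\<tau> ` {0..<n} \<subseteq> {0..<n}" using transf_less[OF \<tau>] by auto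
    ultimately obtain m where "m \<in> {0..<n} - \<tau> ` {0..<n}" by blast
    then show ?thesis
      unfolding nonfull_iff using cyl_subst_outside_range[OF \<tau> x_car] subst_car[OF \<tau> x_car] by auto
  qed
qed

end

section \<open>Algebras generated by elements of small dimension\<close>

locale generated_pea = pea_algebra +
  assumes three_le_dim: "3 \<le> n"
    and generated: "pea_generated_by n D {x \<in> pcar D. dimset n D x \<noteq> {0..<n}}"
begin

lemma third_index:
  assumes "i < n" "j < n"
  obtains k where "k < n" "k \<noteq> i" "k \<noteq> j"
proof -
  have "\<exists>k\<in>{0, 1, 2}. k \<noteq> i \<and> k \<noteq> j" by auto
  then obtain k where "k \<in> {0, 1, 2}" "k \<noteq> i" "k \<noteq> j" by blast
  moreover from this have "k < n" using three_le_dim by auto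
  ultimately show ?thesis using that by blast
qed

lemma diag_nonfull: "i < n \<Longrightarrow> j < n \<Longrightarrow> diag i j \<in> nonfull"
  by (metis third_index diag_cyl_other diag_car nonfull_iff)

lemma one_nonfull: "pone D \<in> nonfull"
  using diag_nonfull[of 0 0] diag_refl[of 0] three_le_dim by simp

lemma zero_nonfull: "pzero D \<in> nonfull"
  unfolding nonfull_iff using zero_car cyl_zero[of "{0}"] three_le_dim by (intro conjI exI[of _ 0]) auto

lemma nonfull_induct [consumes 1, case_names nonfull join meet compl]:
  assumes x: "x \<in> car"
    and nonfull: "\<And>x. x \<in> nonfull \<Longrightarrow> P x"
    and join: "\<And>x y. x \<in> car \<Longrightarrow> y \<in> car \<Longrightarrow> P x \<Longrightarrow> P y \<Longrightarrow> P (join x y)"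
    and meet: "\<And>x y. x \<in> car \<Longrightarrow> y \<in> car \<Longrightarrow> P x \<Longrightarrow> P y \<Longrightarrow> P (meet x y)"
    and compl: "\<And>x. x \<in> car \<Longrightarrow> P x \<Longrightarrow> P (compl x)"
  shows "P x"
proof -
  \<comment> \<open>Substitution instances of nonfull elements and nonempty cylindrifications are nonfull,
    so S is closed under all fundamental operations.\<close>
  define S where "S = {x \<in> car. \<forall>\<tau>\<in>transf n. P (subst \<tau> x)}"
  have nonfull_S: "nonfull \<subseteq> S" unfolding S_def using subst_nonfull nonfull nonfull_iff by blast
  have "car \<subseteq> S"
  proof (rule generated[unfolded pea_generated_by_def, rule_format], intro conjI)
    show "{x \<in> car. dimset n D x \<noteq> {0..<n}} \<subseteq> S" using nonfull_S unfolding nonfull_def .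
    show "S \<subseteq> car" unfolding S_def by blast
    show "pzero D \<in> S" "pone D \<in> S" using nonfull_S zero_nonfull one_nonfull by blast+
    show "\<forall>i<n. \<forall>j<n. diag i j \<in> S" using nonfull_S diag_nonfull by blast
    show "\<forall>x\<in>S. \<forall>y\<in>S. join x y \<in> S \<and> meet x y \<in> S"
      unfolding S_def using join meet subst_join subst_meet join_car meet_car subst_car by auto
    show "\<forall>x\<in>S. compl x \<in> S"
      unfolding S_def using compl subst_compl compl_car subst_car by auto
    show "\<forall>\<Gamma>\<subseteq>{0..<n}. \<forall>x\<in>S. cyl \<Gamma> x \<in> S"
      using cyl_nonfull nonfull_S cyl_empty unfolding S_def by (metis (no_types, lifting) mem_Collect_eq subsetD)
    show "\<forall>\<sigma>\<in>transf n. \<forall>x\<in>S. subst \<sigma> x \<in> S"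
      unfolding S_def using subst_comp[symmetric] transf_comp subst_car by auto
  qed
  then have "P (subst (restrict id {0..<n}) x)" using x transf_id unfolding S_def by blast
  then show ?thesis using subst_id[OF x] by simp
qed

context
  fixes B :: "'c set" and f :: "'a \<Rightarrow> (nat \<Rightarrow> 'c) set"
  assumes hom: "cyl_set_hom n D B f"
begin

lemmas hom_df = cyl_set_hom_df[OF hom]

lemma cyl_set_hom_subst_replace:
  assumes "i < n" "j < n" "x \<in> car"
  shows "f (subst (replace n j i) x) = set_subst n B (replace n j i) (f x)"
proof (cases "i = j")
  case True
  then have "replace n j i = restrict id {0..<n}" using assms(2) by (auto simp: replace_def)
  moreover have "(\<lambda>l\<in>{0..<n}. s (restrict id {0..<n} l)) = s" if "s \<in> {0..<n} \<rightarrow>\<^sub>E B" for s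
    using that by (auto simp: PiE_def extensional_def)
  ultimately show ?thesis
    using subst_id[OF assms(3)] df_set_hom_subset[OF hom_df assms(3)]
    unfolding set_subst_def by auto
next
  case False
  \<comment> \<open>subst [j->i] x is invariant under c_j, and by (E3) it agrees with x on the diagonal d_ij,
    onto which s(j := s i) moves s.\<close>
  let ?\<tau> = "replace n j i" and ?W = "{0..<n} \<rightarrow>\<^sub>E B"
  have \<tau>: "?\<tau> \<in> transf n" using replace_transf assms by auto
  have y: "subst ?\<tau> x \<in> car" using subst_car[OF \<tau> assms(3)] .
  have y_fixed: "cyl {j} (subst ?\<tau> x) = subst ?\<tau> x"
    using cyl_subst_outside_range[OF \<tau> assms(3,2)] False by (auto simp: replace_apply)
  have upd: "s(j := s i) \<in> ?W" "s(j := s i) \<in> f (diag i j)" if "s \<in> ?W" for s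
  proof -
    show "s(j := s i) \<in> ?W"
      by (rule PiE_upd[OF that]) (use that assms(1,2) in \<open>auto simp: PiE_iff\<close>)
    then show "s(j := s i) \<in> f (diag i j)" using cyl_set_hom_diag[OF hom assms(1,2)] False by simp
  qed
  have shift: "(\<lambda>l\<in>{0..<n}. s (?\<tau> l)) = s(j := s i)" if "s \<in> ?W" for s
    using that assms(2) by (intro ext) (auto simp: replace_apply PiE_def extensional_def)
  have "s \<in> f (subst ?\<tau> x) \<longleftrightarrow> s(j := s i) \<in> f x" if s: "s \<in> ?W" for s
  proof
    assume "s \<in> f (subst ?\<tau> x)"
    then have "s(j := s i) \<in> f (subst ?\<tau> x)"
      by (rule df_set_hom_cyl_fixed[OF hom_df y assms(2) y_fixed _ upd(1)[OF s]]) auto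
    then show "s(j := s i) \<in> f x"
      using df_set_hom_subst_meet_diag_le[OF hom_df assms] upd(2)[OF s] by blast
  next
    assume "s(j := s i) \<in> f x"
    then have "s(j := s i) \<in> f (subst ?\<tau> x)"
      using df_set_hom_meet_diag_le_subst[OF hom_df assms] upd(2)[OF s] by blast
    then show "s \<in> f (subst ?\<tau> x)"
      by (rule df_set_hom_cyl_fixed[OF hom_df y assms(2) y_fixed _ s]) auto
  qed
  then show ?thesis
    using df_set_hom_subset[OF hom_df y] shift unfolding set_subst_def by auto
qed

lemma cyl_set_hom_subst_noninjective:
  assumes "\<tau> \<in> transf n" "\<not> inj_on \<tau> {0..<n}" "x \<in> car"
  shows "f (subst \<tau> x) = set_subst n B \<tau> (f x)"
proof -
  define M where "M = {\<tau> \<in> transf n. \<forall>x\<in>car. f (subst \<tau> x) = set_subst n B \<tau> (f x)}"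
  interpret replacement_closed n M
  proof
    fix \<sigma> \<tau> assume \<sigma>: "\<sigma> \<in> M" and \<tau>: "\<tau> \<in> M"
    then have transf: "\<sigma> \<in> transf n" "\<tau> \<in> transf n" unfolding M_def by auto
    have "f (subst (restrict (\<sigma> \<circ> \<tau>) {0..<n}) x) = set_subst n B (restrict (\<sigma> \<circ> \<tau>) {0..<n}) (f x)"
      if x: "x \<in> car" for x
    proof -
      have "f (subst (restrict (\<sigma> \<circ> \<tau>) {0..<n}) x) = f (subst \<sigma> (subst \<tau> x))"
        using subst_comp[OF transf x] by simp
      also have "\<dots> = set_subst n B \<sigma> (set_subst n B \<tau> (f x))"
        using \<sigma> \<tau> x subst_car[OF transf(2) x] unfolding M_def by simp
      finally show ?thesis using set_subst_comp[OF transf] by simp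
    qed
    then show "restrict (\<sigma> \<circ> \<tau>) {0..<n} \<in> M" unfolding M_def using transf_comp[OF transf] by blast
  next
    fix i j assume "i < n" "j < n"
    then show "replace n j i \<in> M"
      unfolding M_def using replace_transf cyl_set_hom_subst_replace by auto
  qed
  show ?thesis using noninjective_mem[OF assms(1,2)] assms(3) unfolding M_def by blast
qed

lemma cyl_set_hom_subst_nonfull:
  assumes \<tau>: "\<tau> \<in> transf n" and x: "x \<in> nonfull"
  shows "f (subst \<tau> x) = set_subst n B \<tau> (f x)"
proof -
  obtain k where k: "k < n" "cyl {k} x = x" and x_car: "x \<in> car" using x unfolding nonfull_iff by blast
  obtain m where m: "m < n" "m \<noteq> k" using third_index[OF k(1) k(1)] by blast
  \<comment> \<open>The value of \<tau> at k does not matter for x, and redefining it makes \<tau> non-injective.\<close>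
  let ?\<tau> = "\<tau>(k := \<tau> m)"
  have \<tau>': "?\<tau> \<in> transf n" using transf_upd[OF \<tau> k(1) transf_less[OF \<tau> m(1)]] .
  have "\<not> inj_on ?\<tau> {0..<n}" using m k(1) unfolding inj_on_def by force
  then have "f (subst ?\<tau> x) = set_subst n B ?\<tau> (f x)"
    using cyl_set_hom_subst_noninjective[OF \<tau>' _ x_car] by blast
  moreover have "subst \<tau> x = subst ?\<tau> x"
    using subst_cyl_cong[of "{k}" \<tau> ?\<tau> x] k \<tau> \<tau>' x_car by auto
  moreover have "(\<lambda>i\<in>{0..<n}. s (\<tau> i)) \<in> f x \<longleftrightarrow> (\<lambda>i\<in>{0..<n}. s (?\<tau> i)) \<in> f x"
    if "s \<in> {0..<n} \<rightarrow>\<^sub>E B" for s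
    using df_set_hom_cyl_fixed[OF hom_df x_car k(1) k(2)] PiE_comp_transf[OF \<tau>' that] PiE_comp_transf[OF \<tau> that]
    by auto
  then have "set_subst n B \<tau> (f x) = set_subst n B ?\<tau> (f x)" unfolding set_subst_def by auto
  ultimately show ?thesis by simp
qed

lemma cyl_set_hom_subst:
  assumes "\<tau> \<in> transf n" "x \<in> car"
  shows "f (subst \<tau> x) = set_subst n B \<tau> (f x)"
  using assms(2) assms(1)
proof (induction x arbitrary: \<tau> rule: nonfull_induct)
  case (nonfull x)
  then show ?case by (rule cyl_set_hom_subst_nonfull[rotated])
next
  case (join x y)
  then show ?case
    using subst_join df_set_hom_join[OF hom_df] subst_car
    unfolding set_subst_def by auto
next
  case (meet x y)
  then show ?case
    using subst_meet df_set_hom_meet[OF hom_df] subst_car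
    unfolding set_subst_def by auto
next
  case (compl x)
  have "f (subst \<tau> (compl x)) = ({0..<n} \<rightarrow>\<^sub>E B) - f (subst \<tau> x)"
    using subst_compl[OF compl.prems compl.hyps] df_set_hom_compl[OF hom_df]
      subst_car[OF compl.prems compl.hyps] by simp
  also have "\<dots> = set_subst n B \<tau> (({0..<n} \<rightarrow>\<^sub>E B) - f x)"
    using compl.IH[OF compl.prems] set_subst_compl[OF compl.prems, symmetric] by simp
  finally show ?case using df_set_hom_compl[OF hom_df compl.hyps] by simp
qed

lemma pea_set_hom_if_cyl_set_hom: "pea_set_hom n D B f"
  unfolding pea_set_hom_def Let_def
  using df_set_hom_subset[OF hom_df] df_set_hom_zero[OF hom_df]
    df_set_hom_one[OF hom_df] df_set_hom_join[OF hom_df]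
    df_set_hom_meet[OF hom_df] df_set_hom_compl[OF hom_df]
    df_set_hom_cyl_set[OF hom_df] cyl_set_hom_diag[OF hom] cyl_set_hom_subst
  unfolding set_subst_def by auto

end

end

section \<open>A common base for a diagonal-free representation\<close>

locale df_rep = generated_pea +
  fixes U :: "nat \<Rightarrow> 'b set" and h :: "'a \<Rightarrow> (nat \<Rightarrow> 'b) set"
  assumes hom: "df_set_hom n D U h"
    and nonempty: "Pi\<^sub>E {0..<n} U \<noteq> {}"
begin

abbreviation "V \<equiv> Pi\<^sub>E {0..<n} U"

lemmas hom_subset = df_set_hom_subset[OF hom]
  and hom_zero = df_set_hom_zero[OF hom]
  and hom_one = df_set_hom_one[OF hom]
  and hom_join = df_set_hom_join[OF hom]
  and hom_meet = df_set_hom_meet[OF hom]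
  and hom_compl = df_set_hom_compl[OF hom]
  and hom_cyl_fixed = df_set_hom_cyl_fixed[OF hom]
  and hom_meet_diag_le_subst = df_set_hom_meet_diag_le_subst[OF hom]
  and hom_subst_meet_diag_le = df_set_hom_subst_meet_diag_le[OF hom]

lemma V_upd: "s \<in> V \<Longrightarrow> k < n \<Longrightarrow> u \<in> U k \<Longrightarrow> s(k := u) \<in> V"
  by (simp add: PiE_upd)

lemma V_mem: "s \<in> V \<Longrightarrow> i < n \<Longrightarrow> s i \<in> U i"
  by auto

lemma hom_diag_refl: "i < n \<Longrightarrow> h (diag i i) = V"
  using diag_refl hom_one by simp

lemma hom_diag_sym:
  assumes "i < n" "j < n"
  shows "h (diag i j) \<subseteq> h (diag j i)"
proof (cases "i = j")
  case False
  have \<tau>: "replace n j i \<in> transf n" using replace_transf assms by auto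
  have "h (compl (diag j i)) \<inter> h (diag i j) \<subseteq> h (subst (replace n j i) (compl (diag j i)))"
    using hom_meet_diag_le_subst[OF assms compl_car[OF diag_car[OF assms(2,1)]]] .
  also have "subst (replace n j i) (compl (diag j i)) = compl (pone D)"
    using subst_compl[OF \<tau> diag_car[OF assms(2,1)]] subst_diag[OF \<tau> assms(2,1)] diag_refl assms
    by (simp add: replace_apply)
  also have "h (compl (pone D)) = {}" using hom_compl[OF one_car] hom_one by simp
  finally show ?thesis using hom_compl[OF diag_car[OF assms(2,1)]] hom_subset[OF diag_car[OF assms]] by auto
qed simp

lemma hom_diag_trans:
  assumes "i < n" "j < n" "k < n"
  shows "h (diag i k) \<inter> h (diag k j) \<subseteq> h (diag i j)"
proof (cases "i = j")
  case False
  have \<tau>: "replace n j k \<in> transf n" using replace_transf assms by auto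
  have "h (compl (diag i j)) \<inter> h (diag k j) \<subseteq> h (subst (replace n j k) (compl (diag i j)))"
    using hom_meet_diag_le_subst[OF assms(3,2) compl_car[OF diag_car[OF assms(1,2)]]] .
  also have "subst (replace n j k) (compl (diag i j)) = compl (diag i k)"
    using subst_compl[OF \<tau> diag_car[OF assms(1,2)]] subst_diag[OF \<tau> assms(1,2)] False assms
    by (simp add: replace_apply)
  finally show ?thesis
    using hom_compl diag_car assms hom_subset[OF diag_car[OF assms(1,3)]] by blast
qed (use hom_diag_refl hom_subset diag_car assms in blast)

lemma hom_diag_total:
  assumes "i < n" "j < n" "i \<noteq> j" "s \<in> V"
  shows "\<exists>u\<in>U i. s(i := u) \<in> h (diag i j)"
proof -
  \<comment> \<open>subst [i->j] fixes c_i d_ij and maps d_ij to 1, so d_ij \<le> c_i d_ij gives c_i d_ij = 1.\<close>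
  have \<tau>: "replace n i j \<in> transf n" using replace_transf assms by auto
  have d: "diag i j \<in> car" using diag_car assms by auto
  have c: "cyl {i} (diag i j) \<in> car" using cyl_car[OF _ d] assms by auto
  have "subst (replace n i j) (cyl {i} (diag i j)) = subst (restrict id {0..<n}) (cyl {i} (diag i j))"
    by (rule subst_cyl_cong) (use assms \<tau> transf_id d in \<open>auto simp: replace_apply\<close>)
  then have fixed: "subst (replace n i j) (cyl {i} (diag i j)) = cyl {i} (diag i j)"
    using subst_id[OF c] by simp
  have "join (diag i j) (cyl {i} (diag i j)) = cyl {i} (diag i j)" using cyl_ext[of "{i}"] assms d by auto
  then have "join (pone D) (cyl {i} (diag i j)) = cyl {i} (diag i j)"
    using arg_cong[where f = "subst (replace n i j)"] subst_join[OF \<tau> d c] fixed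
      subst_diag[OF \<tau> assms(1,2)] diag_refl assms by (simp add: replace_apply)
  then have "s \<in> h (cyl {i} (diag i j))" using hom_join[OF one_car c] hom_one assms(4) by auto
  then obtain t where t: "t \<in> h (diag i j)" "\<forall>l<n. l \<noteq> i \<longrightarrow> s l = t l"
    using df_set_hom_cyl[OF hom assms(1) d] by auto
  have "t \<in> V" using t(1) hom_subset[OF d] by auto
  have "s(i := t i) = t"
    by (rule PiE_ext[OF V_upd[OF assms(4,1) V_mem[OF \<open>t \<in> V\<close> assms(1)]] \<open>t \<in> V\<close>]) (use t(2) in auto)
  then show ?thesis using t(1) V_mem[OF \<open>t \<in> V\<close> assms(1)] by metis
qed

lemma hom_diag_local:
  assumes "i < n" "j < n" "s \<in> h (diag i j)" "t \<in> V" "t i = s i" "t j = s j"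
  shows "t \<in> h (diag i j)"
proof -
  let ?\<Gamma> = "{0..<n} - {i, j}"
  have "cyl ?\<Gamma> (diag i j) = diag i j"
    by (rule cyl_fixed_set) (use diag_cyl_other diag_car assms in auto)
  then have "h (diag i j) = {s \<in> V. \<exists>t\<in>h (diag i j). \<forall>l\<in>{0..<n} - ?\<Gamma>. s l = t l}"
    using df_set_hom_cyl_set[OF hom, of ?\<Gamma> "diag i j"] diag_car assms by auto
  then show ?thesis using assms by auto
qed

lemma hom_diag_exchange:
  assumes ij: "i < n" "j < n" "i \<noteq> j" and x: "x \<in> car" and s: "s \<in> V"
    and u: "u' \<in> U i" "s(i := u) \<in> h (diag i j)" "s(i := u') \<in> h (diag i j)"
    and mem: "s(i := u) \<in> h x"
  shows "s(i := u') \<in> h x"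
proof -
  \<comment> \<open>subst [i->j] x does not depend on coordinate i and agrees with x on the diagonal d_ji.\<close>
  let ?\<tau> = "replace n i j"
  have \<tau>: "?\<tau> \<in> transf n" using replace_transf ij by auto
  have y: "subst ?\<tau> x \<in> car" using subst_car[OF \<tau> x] .
  have y_fixed: "cyl {i} (subst ?\<tau> x) = subst ?\<tau> x"
    using cyl_subst_outside_range[OF \<tau> x ij(1)] ij(3) by (auto simp: replace_apply)
  have "s(i := u) \<in> h (diag j i)" using hom_diag_sym[OF ij(1,2)] u(2) by (rule subsetD)
  then have "s(i := u) \<in> h (subst ?\<tau> x)" using hom_meet_diag_le_subst[OF ij(2,1) x] mem by blast
  then have "s(i := u') \<in> h (subst ?\<tau> x)"
    by (rule hom_cyl_fixed[OF y ij(1) y_fixed _ V_upd[OF s ij(1) u(1)]]) auto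
  moreover have "s(i := u') \<in> h (diag j i)" using hom_diag_sym[OF ij(1,2)] u(3) by (rule subsetD)
  ultimately show ?thesis using hom_subst_meet_diag_le[OF ij(2,1) x] by blast
qed

definition indist :: "nat \<Rightarrow> 'b \<Rightarrow> 'b \<Rightarrow> bool" where
  "indist i u u' \<longleftrightarrow> u \<in> U i \<and> u' \<in> U i \<and> (\<forall>x\<in>car. \<forall>s\<in>V. s(i := u) \<in> h x \<longleftrightarrow> s(i := u') \<in> h x)"

definition diag_rel :: "nat \<Rightarrow> nat \<Rightarrow> 'b \<Rightarrow> 'b \<Rightarrow> bool" where
  "diag_rel i j u v \<longleftrightarrow> (\<exists>s\<in>V. s i = u \<and> s j = v \<and> s \<in> h (diag i j))"

lemma indist_refl: "u \<in> U i \<Longrightarrow> indist i u u"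
  unfolding indist_def by auto

lemma indist_sym: "indist i u u' \<Longrightarrow> indist i u' u"
  unfolding indist_def by auto

lemma indist_trans: "indist i u u' \<Longrightarrow> indist i u' u'' \<Longrightarrow> indist i u u''"
  unfolding indist_def by auto

lemma diag_rel_mem:
  assumes "i < n" "j < n" "diag_rel i j u v" "t \<in> V" "t i = u" "t j = v"
  shows "t \<in> h (diag i j)"
proof -
  obtain s where "s i = u" "s j = v" "s \<in> h (diag i j)" using assms(3) unfolding diag_rel_def by blast
  then show ?thesis using hom_diag_local[OF assms(1,2) _ assms(4)] assms(5,6) by simp
qed

lemma diag_rel_intro: "t \<in> V \<Longrightarrow> t \<in> h (diag i j) \<Longrightarrow> diag_rel i j (t i) (t j)"
  unfolding diag_rel_def by auto

lemma diag_rel_in_U: "i < n \<Longrightarrow> j < n \<Longrightarrow> diag_rel i j u v \<Longrightarrow> u \<in> U i \<and> v \<in> U j"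
  unfolding diag_rel_def using V_mem by blast

lemma diag_rel_sym: "i < n \<Longrightarrow> j < n \<Longrightarrow> diag_rel i j u v \<Longrightarrow> diag_rel j i v u"
  unfolding diag_rel_def using hom_diag_sym by blast

lemma diag_rel_refl_iff:
  assumes i: "i < n"
  shows "diag_rel i i u v \<longleftrightarrow> u = v \<and> u \<in> U i"
proof
  assume "diag_rel i i u v"
  then obtain s where "s \<in> V" "s i = u" "s i = v" unfolding diag_rel_def by blast
  then show "u = v \<and> u \<in> U i" using V_mem[OF _ i] by blast
next
  assume uv: "u = v \<and> u \<in> U i"
  obtain s where "s \<in> V" using nonempty by blast
  then have s: "s(i := u) \<in> V" using V_upd[OF _ i] uv by blast
  then have "diag_rel i i ((s(i := u)) i) ((s(i := u)) i)"
    using diag_rel_intro[OF s] hom_diag_refl[OF i] by blast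
  then show "diag_rel i i u v" using uv by simp
qed

lemma diag_rel_total:
  assumes "i < n" "j < n" "v \<in> U j"
  shows "\<exists>u. diag_rel i j u v"
proof (cases "i = j")
  case False
  obtain s where s: "s \<in> V" using nonempty by blast
  then have s': "s(j := v) \<in> V" using V_upd assms(2,3) by blast
  obtain u where u: "u \<in> U i" "(s(j := v))(i := u) \<in> h (diag i j)"
    using hom_diag_total[OF assms(1,2) False s'] by blast
  show ?thesis
    using diag_rel_intro[OF V_upd[OF s' assms(1) u(1)] u(2)] False by auto
qed (use diag_rel_refl_iff assms in auto)

lemma diag_rel_indist_left:
  assumes "i < n" "j < n" "i \<noteq> j" "diag_rel i j u v" "indist i u u'"
  shows "diag_rel i j u' v"
proof -
  obtain s where s: "s \<in> V" "s i = u" "s j = v" "s \<in> h (diag i j)"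
    using assms(4) unfolding diag_rel_def by blast
  then have "s(i := u) \<in> h (diag i j)" by (metis fun_upd_triv)
  moreover have "s(i := u) \<in> h (diag i j) \<longleftrightarrow> s(i := u') \<in> h (diag i j)"
    using assms(5) s(1) diag_car[OF assms(1,2)] unfolding indist_def by blast
  moreover have "s(i := u') \<in> V" using V_upd[OF s(1) assms(1)] assms(5) unfolding indist_def by blast
  ultimately have "diag_rel i j ((s(i := u')) i) ((s(i := u')) j)" using diag_rel_intro by blast
  then show ?thesis using s(3) assms(3) by simp
qed

lemma diag_rel_indist_right:
  assumes "i < n" "j < n" "i \<noteq> j" "diag_rel i j u v" "indist j v v'"
  shows "diag_rel i j u v'"
proof -
  have "diag_rel j i v' u"
    using diag_rel_indist_left[OF assms(2,1) _ diag_rel_sym[OF assms(1,2,4)] assms(5)] assms(3) by blast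
  then show ?thesis using diag_rel_sym[OF assms(2,1)] by blast
qed

lemma diag_rel_exchange:
  assumes ij: "i < n" "j < n" "i \<noteq> j" and R: "diag_rel i j u v" "diag_rel i j u' v"
    and t: "t \<in> V" "t j = v" and y: "y \<in> car" and mem: "t(i := u) \<in> h y"
  shows "t(i := u') \<in> h y"
proof (rule hom_diag_exchange[OF ij y t(1) _ _ _ mem])
  have u: "u \<in> U i" "u' \<in> U i" using diag_rel_in_U[OF ij(1,2)] R by blast+
  then show "u' \<in> U i" by blast
  show "t(i := u) \<in> h (diag i j)" "t(i := u') \<in> h (diag i j)"
    using diag_rel_mem[OF ij(1,2) R(1) V_upd[OF t(1) ij(1) u(1)]]
      diag_rel_mem[OF ij(1,2) R(2) V_upd[OF t(1) ij(1) u(2)]] t(2) ij(3) by simp_all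
qed

lemma diag_rel_transfer_via_third:
  assumes ij: "i < n" "j < n" "i \<noteq> j" and R: "diag_rel i j u v" "diag_rel i j u' v"
    and x: "x \<in> car" and k: "k < n" "k \<noteq> i" "k \<noteq> j" "cyl {k} x = x"
    and s: "s \<in> V" and mem: "s(i := u) \<in> h x"
  shows "s(i := u') \<in> h x"
proof -
  have u: "u \<in> U i" "u' \<in> U i" and v: "v \<in> U j" using diag_rel_in_U[OF ij(1,2)] R by blast+
  let ?\<tau> = "replace n i k"
  have \<tau>: "?\<tau> \<in> transf n" using replace_transf ij k by auto
  have y: "subst ?\<tau> x \<in> car" using subst_car[OF \<tau> x] .
  have y_fixed: "cyl {i} (subst ?\<tau> x) = subst ?\<tau> x"
    using cyl_subst_outside_range[OF \<tau> x ij(1)] k(2) by (auto simp: replace_apply)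
  have s1: "s(i := u) \<in> V" using V_upd[OF s ij(1) u(1)] .
  obtain w where w: "w \<in> U k" "(s(i := u))(k := w) \<in> h (diag k i)"
    using hom_diag_total[OF k(1) ij(1) k(2) s1] by blast
  define t where "t = (s(i := u))(k := w)"
  have t: "t \<in> V" unfolding t_def using V_upd[OF s1 k(1) w(1)] .
  have "t \<in> h x" unfolding t_def by (rule hom_cyl_fixed[OF x k(1) k(4) mem t[unfolded t_def]]) auto
  then have "t \<in> h (subst ?\<tau> x)" using hom_meet_diag_le_subst[OF k(1) ij(1) x] w(2) t_def by blast
  then have ty: "t(i := u') \<in> h (subst ?\<tau> x)"
    by (rule hom_cyl_fixed[OF y ij(1) y_fixed _ V_upd[OF t ij(1) u(2)]]) auto
  have tv: "t(j := v) \<in> V" using V_upd[OF t ij(2) v] .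
  have "t(j := v) \<in> h (diag k i)"
    by (rule hom_diag_local[OF k(1) ij(1) w(2)[folded t_def] tv]) (use k(2,3) ij(3) in auto)
  moreover have "(t(j := v))(i := u) = t(j := v)" using ij(3) by (auto simp: t_def k(2)[symmetric])
  ultimately have "(t(j := v))(i := u') \<in> h (diag k i)"
    using diag_rel_exchange[OF ij R tv _ diag_car[OF k(1) ij(1)]] by simp
  then have "t(i := u') \<in> h (diag k i)"
    by (rule hom_diag_local[OF k(1) ij(1) _ V_upd[OF t ij(1) u(2)]]) (use k(2,3) ij(3) in auto)
  then have "t(i := u') \<in> h x" using hom_subst_meet_diag_le[OF k(1) ij(1) x] ty by blast
  then show ?thesis
    by (rule hom_cyl_fixed[OF x k(1) k(4) _ V_upd[OF s ij(1) u(2)]]) (use k(2) in \<open>auto simp: t_def\<close>)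
qed

lemma diag_rel_transfer_nonfull:
  assumes ij: "i < n" "j < n" "i \<noteq> j" and R: "diag_rel i j u v" "diag_rel i j u' v"
    and x: "x \<in> nonfull" and s: "s \<in> V" and mem: "s(i := u) \<in> h x"
  shows "s(i := u') \<in> h x"
proof -
  obtain k where x_car: "x \<in> car" and k: "k < n" "cyl {k} x = x" using x unfolding nonfull_iff by blast
  have u: "u' \<in> U i" and v: "v \<in> U j" using diag_rel_in_U[OF ij(1,2)] R by blast+
  have s': "s(i := u') \<in> V" using V_upd[OF s ij(1) u] .
  consider "k = i" | "k = j" | "k \<noteq> i" "k \<noteq> j" by blast
  then show ?thesis
  proof cases
    case 1
    then show ?thesis by (intro hom_cyl_fixed[OF x_car k mem s']) auto
  next
    case 2
    have sv: "s(j := v) \<in> V" using V_upd[OF s ij(2) v] .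
    have "(s(j := v))(i := u) \<in> h x"
      by (rule hom_cyl_fixed[OF x_car k mem V_upd[OF sv ij(1)]]) (use 2 ij(3) diag_rel_in_U[OF ij(1,2) R(1)] in auto)
    then have "(s(j := v))(i := u') \<in> h x" using diag_rel_exchange[OF ij R sv _ x_car] by simp
    then show ?thesis by (rule hom_cyl_fixed[OF x_car k _ s']) (use 2 ij(3) in auto)
  next
    case 3
    then show ?thesis using diag_rel_transfer_via_third[OF ij R x_car k(1) _ _ k(2) s mem] by blast
  qed
qed

lemma diag_rel_unique:
  assumes ij: "i < n" "j < n" and R: "diag_rel i j u v" "diag_rel i j u' v"
  shows "indist i u u'"
proof (cases "i = j")
  case True
  then show ?thesis using R diag_rel_refl_iff[OF ij(1)] indist_refl by auto
next
  case False
  have u: "u \<in> U i" "u' \<in> U i" using diag_rel_in_U[OF ij] R by blast+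
  have "\<forall>s\<in>V. s(i := u) \<in> h x \<longleftrightarrow> s(i := u') \<in> h x" if "x \<in> car" for x
    using that
  proof (induction x rule: nonfull_induct)
    case (nonfull x)
    then show ?case
      using diag_rel_transfer_nonfull[OF ij False R] diag_rel_transfer_nonfull[OF ij False R(2,1)] by blast
  next
    case (join x y)
    then show ?case using hom_join by simp
  next
    case (meet x y)
    then show ?case using hom_meet by simp
  next
    case (compl x)
    show ?case
    proof
      fix s assume "s \<in> V"
      then have "s(i := u) \<in> V" "s(i := u') \<in> V" using V_upd[OF _ ij(1)] u by blast+
      then show "s(i := u) \<in> h (compl x) \<longleftrightarrow> s(i := u') \<in> h (compl x)"
        using compl.IH \<open>s \<in> V\<close> hom_compl[OF compl.hyps] by blast
    qed
  qed
  then show ?thesis unfolding indist_def using u by blast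
qed

lemma indist_hom_cong:
  assumes x: "x \<in> car" and st: "s \<in> V" "t \<in> V" and indist: "\<And>i. i < n \<Longrightarrow> indist i (s i) (t i)"
  shows "s \<in> h x \<longleftrightarrow> t \<in> h x"
proof -
  define mix where "mix m = (\<lambda>l. if l < m then t l else s l)" for m
  have mix_V: "mix m \<in> V" for m using st unfolding mix_def by (auto simp: PiE_iff extensional_def)
  have "s \<in> h x \<longleftrightarrow> mix m \<in> h x" if "m \<le> n" for m
    using that
  proof (induction m)
    case 0
    then show ?case by (simp add: mix_def)
  next
    case (Suc m)
    have step: "mix (Suc m) = (mix m)(m := t m)" "(mix m)(m := s m) = mix m"
      by (auto simp: mix_def)
    have "\<forall>y\<in>car. \<forall>r\<in>V. r(m := s m) \<in> h y \<longleftrightarrow> r(m := t m) \<in> h y"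
      using indist[of m] Suc.prems unfolding indist_def by simp
    then have "(mix m)(m := s m) \<in> h x \<longleftrightarrow> (mix m)(m := t m) \<in> h x" using mix_V[of m] x by blast
    then have "mix m \<in> h x \<longleftrightarrow> mix (Suc m) \<in> h x" by (simp only: step)
    then show ?case using Suc by simp
  qed
  moreover have "mix n = t" using st unfolding mix_def by (auto simp: PiE_def extensional_def)
  ultimately show ?thesis by blast
qed

lemma indist_in_U: "indist i u u' \<Longrightarrow> u \<in> U i \<and> u' \<in> U i"
  unfolding indist_def by blast

lemma diag_rel_from_0:
  assumes "i < n" "a \<in> U 0"
  obtains b where "diag_rel 0 i a b"
  using diag_rel_total[OF assms(1) _ assms(2)] diag_rel_sym[OF assms(1)] assms(1) by blast

lemma diag_rel_indist_iff:
  assumes i: "i < n" and R: "diag_rel 0 i a b" "diag_rel 0 i a' b'"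
  shows "indist 0 a a' \<longleftrightarrow> indist i b b'"
proof (cases "i = 0")
  case True
  then show ?thesis using R diag_rel_refl_iff[OF i] by simp
next
  case False
  have n0: "0 < n" using i by simp
  show ?thesis
  proof
    assume "indist 0 a a'"
    then have "diag_rel 0 i a' b" using diag_rel_indist_left[OF n0 i _ R(1)] False by simp
    then show "indist i b b'" using diag_rel_unique[OF i n0] diag_rel_sym[OF n0 i] R(2) by blast
  next
    assume "indist i b b'"
    then have "diag_rel 0 i a b'" using diag_rel_indist_right[OF n0 i _ R(1)] False by simp
    then show "indist 0 a a'" using diag_rel_unique[OF n0 i _ R(2)] by blast
  qed
qed

lemma hom_diag_0_iff_indist:
  assumes t: "t \<in> V" and j: "j < n" and t0: "t 0 = a" and R: "diag_rel 0 j a' (t j)"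
  shows "t \<in> h (diag 0 j) \<longleftrightarrow> indist 0 a a'"
proof (cases "j = 0")
  case True
  then show ?thesis
    using R t0 t diag_rel_refl_iff[OF j] hom_diag_refl[OF j] indist_refl by auto
next
  case False
  have n0: "0 < n" using j by simp
  show ?thesis
  proof
    assume "t \<in> h (diag 0 j)"
    then have "diag_rel 0 j a (t j)" using diag_rel_intro[OF t] t0 by metis
    then show "indist 0 a a'" using diag_rel_unique[OF n0 j _ R] by blast
  next
    assume "indist 0 a a'"
    then have "diag_rel 0 j a (t j)" using diag_rel_indist_left[OF n0 j _ R] indist_sym False by metis
    then show "t \<in> h (diag 0 j)" using diag_rel_mem[OF n0 j _ t t0] by blast
  qed
qed

lemma hom_diag_iff_indist:
  assumes t: "t \<in> V" and ij: "i < n" "j < n"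
    and R: "diag_rel 0 i a (t i)" "diag_rel 0 j a' (t j)"
  shows "t \<in> h (diag i j) \<longleftrightarrow> indist 0 a a'"
proof -
  have n0: "0 < n" using ij by simp
  consider "i = 0" | "j = 0" | "i \<noteq> 0" "j \<noteq> 0" by blast
  then show ?thesis
  proof cases
    case 1
    then show ?thesis using hom_diag_0_iff_indist[OF t ij(2) _ R(2)] R(1) diag_rel_refl_iff[OF n0] by simp
  next
    case 2
    then have "t \<in> h (diag i j) \<longleftrightarrow> t \<in> h (diag 0 i)" using hom_diag_sym ij by blast
    also have "\<dots> \<longleftrightarrow> indist 0 a' a"
      using hom_diag_0_iff_indist[OF t ij(1) _ R(1)] R(2) 2 diag_rel_refl_iff[OF n0] by simp
    finally show ?thesis using indist_sym by blast
  next
    case 3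
    let ?t = "t(0 := a)"
    have a: "a \<in> U 0" using diag_rel_in_U[OF n0 ij(1) R(1)] by blast
    have t': "?t \<in> V" using V_upd[OF t n0 a] .
    have t'i: "?t \<in> h (diag 0 i)" by (rule diag_rel_mem[OF n0 ij(1) R(1) t']) (use 3 in auto)
    have "t \<in> h (diag i j) \<longleftrightarrow> ?t \<in> h (diag i j)"
      using hom_diag_local[OF ij _ t'] hom_diag_local[OF ij _ t] 3 by auto
    also have "\<dots> \<longleftrightarrow> ?t \<in> h (diag 0 j)"
      using hom_diag_trans[OF n0 ij(2,1)] hom_diag_trans[OF ij(1,2) n0] hom_diag_sym[OF n0 ij(1)] t'i
      by blast
    also have "\<dots> \<longleftrightarrow> indist 0 a a'"
      using hom_diag_0_iff_indist[OF t' ij(2) _ ] R(2) 3 by simp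
    finally show ?thesis .
  qed
qed

definition indist_rel :: "('b \<times> 'b) set" where
  "indist_rel = {(a, a'). indist 0 a a'}"

definition qbase :: "'b set set" where
  "qbase = U 0 // indist_rel"

definition pick :: "nat \<Rightarrow> 'b set \<Rightarrow> 'b" where
  "pick i X = (SOME b. b \<in> U i \<and> (\<exists>a\<in>X. diag_rel 0 i a b))"

definition lift :: "(nat \<Rightarrow> 'b set) \<Rightarrow> nat \<Rightarrow> 'b" where
  "lift \<sigma> = (\<lambda>i\<in>{0..<n}. pick i (\<sigma> i))"

definition qhom :: "'a \<Rightarrow> (nat \<Rightarrow> 'b set) set" where
  "qhom x = {\<sigma> \<in> {0..<n} \<rightarrow>\<^sub>E qbase. lift \<sigma> \<in> h x}"

lemma equiv_indist_rel: "equiv (U 0) indist_rel"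
  unfolding indist_rel_def
  by (rule equivI) (auto simp: refl_on_def sym_def trans_def intro: indist_refl indist_sym indist_trans
      dest: indist_in_U)

lemma qbase_subset: "X \<in> qbase \<Longrightarrow> X \<subseteq> U 0"
  unfolding qbase_def using in_quotient_imp_subset[OF equiv_indist_rel] by blast

lemma qbase_eq_iff: "X \<in> qbase \<Longrightarrow> Y \<in> qbase \<Longrightarrow> a \<in> X \<Longrightarrow> a' \<in> Y \<Longrightarrow> X = Y \<longleftrightarrow> indist 0 a a'"
  unfolding qbase_def using quotient_eq_iff[OF equiv_indist_rel] by (simp add: indist_rel_def)

lemma qbase_indist: "X \<in> qbase \<Longrightarrow> a \<in> X \<Longrightarrow> a' \<in> X \<Longrightarrow> indist 0 a a'"
  using qbase_eq_iff[of X X a a'] by simp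

lemma class_in_qbase: "a \<in> U 0 \<Longrightarrow> indist_rel `` {a} \<in> qbase"
  unfolding qbase_def by (rule quotientI)

lemma class_self: "a \<in> U 0 \<Longrightarrow> a \<in> indist_rel `` {a}"
  by (rule equiv_class_self[OF equiv_indist_rel])

lemma pick_spec:
  assumes "X \<in> qbase" "i < n"
  shows "pick i X \<in> U i \<and> (\<exists>a\<in>X. diag_rel 0 i a (pick i X))"
proof -
  obtain a where a: "a \<in> X" using in_quotient_imp_non_empty[OF equiv_indist_rel] assms(1)
    unfolding qbase_def by blast
  then obtain b where R: "diag_rel 0 i a b"
    using diag_rel_from_0[OF assms(2)] qbase_subset[OF assms(1)] by blast
  have "0 < n" using assms(2) by simp
  then have "b \<in> U i \<and> (\<exists>a\<in>X. diag_rel 0 i a b)" using a R diag_rel_in_U[OF _ assms(2) R] by blast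
  then show ?thesis unfolding pick_def by (rule someI)
qed

lemma lift_V: "\<sigma> \<in> {0..<n} \<rightarrow>\<^sub>E qbase \<Longrightarrow> lift \<sigma> \<in> V"
  unfolding lift_def using pick_spec by (auto simp: PiE_def Pi_def)

lemma qhom_iff_hom:
  assumes x: "x \<in> car" and \<sigma>: "\<sigma> \<in> {0..<n} \<rightarrow>\<^sub>E qbase" and t: "t \<in> V"
    and R: "\<And>i. i < n \<Longrightarrow> \<exists>a\<in>\<sigma> i. diag_rel 0 i a (t i)"
  shows "\<sigma> \<in> qhom x \<longleftrightarrow> t \<in> h x"
proof -
  have "indist i (lift \<sigma> i) (t i)" if i: "i < n" for i
  proof -
    have X: "\<sigma> i \<in> qbase" using \<sigma> i by auto
    obtain a1 where a1: "a1 \<in> \<sigma> i" "diag_rel 0 i a1 (pick i (\<sigma> i))" using pick_spec[OF X i] by blast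
    obtain a where a: "a \<in> \<sigma> i" "diag_rel 0 i a (t i)" using R[OF i] by blast
    have "indist i (pick i (\<sigma> i)) (t i)"
      using diag_rel_indist_iff[OF i a1(2) a(2)] qbase_indist[OF X a1(1) a(1)] by blast
    then show ?thesis unfolding lift_def using i by simp
  qed
  then have "lift \<sigma> \<in> h x \<longleftrightarrow> t \<in> h x" using indist_hom_cong[OF x lift_V[OF \<sigma>] t] by blast
  then show ?thesis unfolding qhom_def using \<sigma> by blast
qed

lemma qhom_nonempty:
  assumes x: "x \<in> car" and t: "t \<in> h x"
  shows "qhom x \<noteq> {}"
proof -
  have t_V: "t \<in> V" using t hom_subset[OF x] by blast
  have "\<exists>a. a \<in> U 0 \<and> diag_rel 0 i a (t i)" if "i < n" for i
    using diag_rel_total[OF _ that V_mem[OF t_V that]] diag_rel_in_U[OF _ that] that by blast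
  then obtain A where A: "\<And>i. i < n \<Longrightarrow> A i \<in> U 0 \<and> diag_rel 0 i (A i) (t i)" by metis
  define \<sigma> where "\<sigma> = (\<lambda>i\<in>{0..<n}. indist_rel `` {A i})"
  have \<sigma>: "\<sigma> \<in> {0..<n} \<rightarrow>\<^sub>E qbase" unfolding \<sigma>_def using A class_in_qbase by simp
  have "\<sigma> \<in> qhom x"
    by (rule qhom_iff_hom[OF x \<sigma> t_V, THEN iffD2, OF _ t]) (use A class_self in \<open>force simp: \<sigma>_def\<close>)
  then show ?thesis by blast
qed

lemma qhom_Union: "h s = (\<Union>x\<in>X. h x) \<Longrightarrow> qhom s = (\<Union>x\<in>X. qhom x)"
  unfolding qhom_def by auto

lemma qhom_cyl:
  assumes k: "k < n" and x: "x \<in> car"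
  shows "qhom (cyl {k} x) = {\<sigma> \<in> {0..<n} \<rightarrow>\<^sub>E qbase. \<exists>\<tau>\<in>qhom x. \<forall>j<n. j \<noteq> k \<longrightarrow> \<sigma> j = \<tau> j}"
proof (intro set_eqI iffI)
  fix \<sigma> assume "\<sigma> \<in> qhom (cyl {k} x)"
  then have \<sigma>: "\<sigma> \<in> {0..<n} \<rightarrow>\<^sub>E qbase" and "lift \<sigma> \<in> h (cyl {k} x)" unfolding qhom_def by blast+
  then obtain t where t: "t \<in> h x" "\<forall>j<n. j \<noteq> k \<longrightarrow> lift \<sigma> j = t j"
    using df_set_hom_cyl[OF hom k x] by blast
  have t_V: "t \<in> V" using t(1) hom_subset[OF x] by blast
  have n0: "0 < n" using k by simp
  obtain a where a: "diag_rel 0 k a (t k)" using diag_rel_total[OF n0 k V_mem[OF t_V k]] by blast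
  then have a_U: "a \<in> U 0" using diag_rel_in_U[OF n0 k] by blast
  let ?\<tau> = "\<sigma>(k := indist_rel `` {a})"
  have \<tau>: "?\<tau> \<in> {0..<n} \<rightarrow>\<^sub>E qbase" using PiE_upd[OF \<sigma> _ class_in_qbase[OF a_U]] k by simp
  have "?\<tau> \<in> qhom x"
  proof (rule qhom_iff_hom[OF x \<tau> t_V, THEN iffD2, OF _ t(1)])
    fix i assume i: "i < n"
    show "\<exists>a\<in>?\<tau> i. diag_rel 0 i a (t i)"
    proof (cases "i = k")
      case True
      then show ?thesis using a class_self[OF a_U] by (intro bexI[of _ a]) simp_all
    next
      case False
      have "\<sigma> i \<in> qbase" using PiE_mem[OF \<sigma>, of i] i by simp
      then obtain a where "a \<in> \<sigma> i" "diag_rel 0 i a (pick i (\<sigma> i))" using pick_spec i by blast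
      moreover have "t i = pick i (\<sigma> i)" using t(2) i False unfolding lift_def by simp
      ultimately show ?thesis using False by (intro bexI[of _ a]) simp_all
    qed
  qed
  then show "\<sigma> \<in> {\<sigma> \<in> {0..<n} \<rightarrow>\<^sub>E qbase. \<exists>\<tau>\<in>qhom x. \<forall>j<n. j \<noteq> k \<longrightarrow> \<sigma> j = \<tau> j}"
    using \<sigma> by (intro CollectI conjI bexI[of _ ?\<tau>]) simp_all
next
  fix \<sigma> assume "\<sigma> \<in> {\<sigma> \<in> {0..<n} \<rightarrow>\<^sub>E qbase. \<exists>\<tau>\<in>qhom x. \<forall>j<n. j \<noteq> k \<longrightarrow> \<sigma> j = \<tau> j}"
  then obtain \<tau> where \<sigma>: "\<sigma> \<in> {0..<n} \<rightarrow>\<^sub>E qbase" and \<tau>: "\<tau> \<in> qhom x" "\<forall>j<n. j \<noteq> k \<longrightarrow> \<sigma> j = \<tau> j"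
    by blast
  have "lift \<tau> \<in> h x" using \<tau>(1) unfolding qhom_def by blast
  moreover have "\<forall>j<n. j \<noteq> k \<longrightarrow> lift \<sigma> j = lift \<tau> j" using \<tau>(2) unfolding lift_def by simp
  ultimately have "lift \<sigma> \<in> h (cyl {k} x)" using df_set_hom_cyl[OF hom k x] lift_V[OF \<sigma>] by blast
  then show "\<sigma> \<in> qhom (cyl {k} x)" unfolding qhom_def using \<sigma> by blast
qed

lemma qhom_diag:
  assumes ij: "i < n" "j < n"
  shows "qhom (diag i j) = {\<sigma> \<in> {0..<n} \<rightarrow>\<^sub>E qbase. \<sigma> i = \<sigma> j}"
proof (intro set_eqI)
  fix \<sigma>
  show "\<sigma> \<in> qhom (diag i j) \<longleftrightarrow> \<sigma> \<in> {\<sigma> \<in> {0..<n} \<rightarrow>\<^sub>E qbase. \<sigma> i = \<sigma> j}"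
  proof (cases "\<sigma> \<in> {0..<n} \<rightarrow>\<^sub>E qbase")
    case True
    then have X: "\<sigma> i \<in> qbase" "\<sigma> j \<in> qbase" using ij by auto
    obtain a where a: "a \<in> \<sigma> i" "diag_rel 0 i a (pick i (\<sigma> i))" using pick_spec[OF X(1) ij(1)] by blast
    obtain a' where a': "a' \<in> \<sigma> j" "diag_rel 0 j a' (pick j (\<sigma> j))" using pick_spec[OF X(2) ij(2)] by blast
    have "lift \<sigma> \<in> h (diag i j) \<longleftrightarrow> indist 0 a a'"
      using hom_diag_iff_indist[OF lift_V[OF True] ij] a(2) a'(2) ij unfolding lift_def by simp
    also have "\<dots> \<longleftrightarrow> \<sigma> i = \<sigma> j" using qbase_eq_iff[OF X a(1) a'(1)] by simp
    finally show ?thesis unfolding qhom_def using True by simp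
  qed (simp add: qhom_def)
qed

lemma cyl_set_hom_qhom: "cyl_set_hom n D qbase qhom"
  unfolding cyl_set_hom_def df_set_hom_def Let_def pc_def
proof (intro conjI ballI allI impI)
  show "qhom x \<subseteq> {0..<n} \<rightarrow>\<^sub>E qbase" for x unfolding qhom_def by blast
  show "qhom (pzero D) = {}" unfolding qhom_def hom_zero by simp
  show "qhom (pone D) = {0..<n} \<rightarrow>\<^sub>E qbase" unfolding qhom_def hom_one using lift_V by blast
  show "qhom (join x y) = qhom x \<union> qhom y" if "x \<in> car" "y \<in> car" for x y
    unfolding qhom_def using hom_join[OF that] by blast
  show "qhom (meet x y) = qhom x \<inter> qhom y" if "x \<in> car" "y \<in> car" for x y
    unfolding qhom_def using hom_meet[OF that] by blast
  show "qhom (compl x) = ({0..<n} \<rightarrow>\<^sub>E qbase) - qhom x" if "x \<in> car" for x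
    unfolding qhom_def using hom_compl[OF that] lift_V by blast
  show "qhom (cyl {k} x) = {s \<in> {0..<n} \<rightarrow>\<^sub>E qbase. \<exists>t\<in>qhom x. \<forall>j\<in>{0..<n}. j \<noteq> k \<longrightarrow> s j = t j}"
    if "k < n" "x \<in> car" for k x
    unfolding qhom_cyl[OF that] by (simp add: Ball_def)
  show "qhom (diag i j) = {s \<in> {0..<n} \<rightarrow>\<^sub>E qbase. s i = s j}" if "i < n" "j < n" for i j
    using qhom_diag[OF that] .
qed

end

section \<open>Shrinking the base\<close>

lemma cyl_set_hom_restrict_base:
  assumes hom: "cyl_set_hom n A B g" and sub: "B' \<subseteq> B"
    and closed: "\<And>\<sigma> k x. \<sigma> \<in> {0..<n} \<rightarrow>\<^sub>E B' \<Longrightarrow> k < n \<Longrightarrow> x \<in> pcar A \<Longrightarrow>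
        \<sigma> \<in> g (pcyl A {k} x) \<Longrightarrow> \<exists>\<tau>\<in>g x. (\<forall>j<n. j \<noteq> k \<longrightarrow> \<sigma> j = \<tau> j) \<and> \<tau> k \<in> B'"
  shows "cyl_set_hom n A B' (\<lambda>x. g x \<inter> ({0..<n} \<rightarrow>\<^sub>E B'))"
proof -
  note df = cyl_set_hom_df[OF hom]
  have W: "{0..<n} \<rightarrow>\<^sub>E B' \<subseteq> {0..<n} \<rightarrow>\<^sub>E B" using sub by (auto simp: PiE_iff)
  have cyl: "g (pcyl A {k} x) \<inter> ({0..<n} \<rightarrow>\<^sub>E B') =
      {s \<in> {0..<n} \<rightarrow>\<^sub>E B'. \<exists>t\<in>g x \<inter> ({0..<n} \<rightarrow>\<^sub>E B'). \<forall>j\<in>{0..<n}. j \<noteq> k \<longrightarrow> s j = t j}"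
    if k: "k < n" and x: "x \<in> pcar A" for k x
  proof (intro set_eqI iffI)
    fix \<sigma> assume \<sigma>: "\<sigma> \<in> g (pcyl A {k} x) \<inter> ({0..<n} \<rightarrow>\<^sub>E B')"
    then obtain \<tau> where \<tau>: "\<tau> \<in> g x" "\<forall>j<n. j \<noteq> k \<longrightarrow> \<sigma> j = \<tau> j" "\<tau> k \<in> B'"
      using closed[OF _ k x] by blast
    have "\<tau> \<in> {0..<n} \<rightarrow>\<^sub>E B" using \<tau>(1) df_set_hom_subset[OF df x] by blast
    then have "\<tau> \<in> {0..<n} \<rightarrow>\<^sub>E B'" using \<sigma> \<tau>(2,3) by (auto simp: PiE_iff) (metis PiE_mem atLeastLessThan_iff zero_le)
    then show "\<sigma> \<in> {s \<in> {0..<n} \<rightarrow>\<^sub>E B'. \<exists>t\<in>g x \<inter> ({0..<n} \<rightarrow>\<^sub>E B'). \<forall>j\<in>{0..<n}. j \<noteq> k \<longrightarrow> s j = t j}"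
      using \<sigma> \<tau>(1,2) by auto
  qed (use df_set_hom_cyl[OF df k x] W in auto)
  show ?thesis
    unfolding cyl_set_hom_def df_set_hom_def Let_def pc_def
  proof (intro conjI ballI allI impI)
    show "g (pzero A) \<inter> ({0..<n} \<rightarrow>\<^sub>E B') = {}" using df_set_hom_zero[OF df] by simp
    show "g (pone A) \<inter> ({0..<n} \<rightarrow>\<^sub>E B') = {0..<n} \<rightarrow>\<^sub>E B'" using df_set_hom_one[OF df] W by blast
    show "g (pjoin A x y) \<inter> ({0..<n} \<rightarrow>\<^sub>E B') = g x \<inter> ({0..<n} \<rightarrow>\<^sub>E B') \<union> g y \<inter> ({0..<n} \<rightarrow>\<^sub>E B')"
      "g (pmeet A x y) \<inter> ({0..<n} \<rightarrow>\<^sub>E B') = g x \<inter> ({0..<n} \<rightarrow>\<^sub>E B') \<inter> (g y \<inter> ({0..<n} \<rightarrow>\<^sub>E B'))"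
      if "x \<in> pcar A" "y \<in> pcar A" for x y
      using df_set_hom_join[OF df that] df_set_hom_meet[OF df that] by blast+
    show "g (pcompl A x) \<inter> ({0..<n} \<rightarrow>\<^sub>E B') = ({0..<n} \<rightarrow>\<^sub>E B') - g x \<inter> ({0..<n} \<rightarrow>\<^sub>E B')"
      if "x \<in> pcar A" for x
      using df_set_hom_compl[OF df that] W by blast
    show "g (pdiag A i j) \<inter> ({0..<n} \<rightarrow>\<^sub>E B') = {s \<in> {0..<n} \<rightarrow>\<^sub>E B'. s i = s j}"
      if "i < n" "j < n" for i j
      using cyl_set_hom_diag[OF hom that] W by blast
  qed (use cyl in blast)+
qed

definition rename_hom ::
    "nat \<Rightarrow> 'c set \<Rightarrow> ('c \<Rightarrow> 'd) \<Rightarrow> ('a \<Rightarrow> (nat \<Rightarrow> 'c) set) \<Rightarrow> 'a \<Rightarrow> (nat \<Rightarrow> 'd) set" where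
  "rename_hom n B e g x = {\<rho> \<in> {0..<n} \<rightarrow>\<^sub>E e ` B. (\<lambda>i\<in>{0..<n}. inv_into B e (\<rho> i)) \<in> g x}"

context
  fixes n :: nat and A :: "'a pea" and B :: "'c set" and g :: "'a \<Rightarrow> (nat \<Rightarrow> 'c) set"
    and e :: "'c \<Rightarrow> 'd"
  assumes hom: "cyl_set_hom n A B g" and inj: "inj_on e B"
begin

lemma rename_inv_PiE:
  "\<rho> \<in> {0..<n} \<rightarrow>\<^sub>E e ` B \<Longrightarrow> (\<lambda>i\<in>{0..<n}. inv_into B e (\<rho> i)) \<in> {0..<n} \<rightarrow>\<^sub>E B"
  by (auto simp: PiE_iff inv_into_into)

lemma rename_hom_cyl:
  assumes k: "k < n" and x: "x \<in> pcar A"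
  shows "rename_hom n B e g (pcyl A {k} x) =
    {\<rho> \<in> {0..<n} \<rightarrow>\<^sub>E e ` B. \<exists>\<rho>'\<in>rename_hom n B e g x. \<forall>j\<in>{0..<n}. j \<noteq> k \<longrightarrow> \<rho> j = \<rho>' j}"
    (is "?f (pcyl A {k} x) = ?rhs")
proof (intro set_eqI iffI)
  note df = cyl_set_hom_df[OF hom]
  let ?inv = "\<lambda>\<rho>. \<lambda>i\<in>{0..<n}. inv_into B e (\<rho> i)"
  fix \<rho> assume "\<rho> \<in> ?f (pcyl A {k} x)"
  then have \<rho>: "\<rho> \<in> {0..<n} \<rightarrow>\<^sub>E e ` B" and "?inv \<rho> \<in> g (pcyl A {k} x)"
    unfolding rename_hom_def by blast+
  then obtain \<tau> where \<tau>: "\<tau> \<in> g x" "\<forall>j<n. j \<noteq> k \<longrightarrow> ?inv \<rho> j = \<tau> j"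
    using df_set_hom_cyl[OF df k x] by blast
  have \<tau>_W: "\<tau> \<in> {0..<n} \<rightarrow>\<^sub>E B" using \<tau>(1) df_set_hom_subset[OF df x] by blast
  let ?\<rho> = "\<rho>(k := e (\<tau> k))"
  have "\<tau> k \<in> B" using PiE_mem[OF \<tau>_W, of k] k by simp
  then have \<rho>': "?\<rho> \<in> {0..<n} \<rightarrow>\<^sub>E e ` B" using PiE_upd[OF \<rho>, of k "e (\<tau> k)"] k by simp
  have "?inv ?\<rho> = \<tau>"
  proof (rule PiE_ext[OF rename_inv_PiE[OF \<rho>'] \<tau>_W])
    fix i assume i: "i \<in> {0..<n}"
    show "?inv ?\<rho> i = \<tau> i"
      using i k \<tau>(2) inv_into_f_f[OF inj PiE_mem[OF \<tau>_W, of k]] by (cases "i = k") auto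
  qed
  then have "?\<rho> \<in> ?f x" using \<rho>' \<tau>(1) unfolding rename_hom_def by simp
  then show "\<rho> \<in> ?rhs" using \<rho> by (intro CollectI conjI bexI[of _ ?\<rho>]) simp_all
next
  note df = cyl_set_hom_df[OF hom]
  let ?inv = "\<lambda>\<rho>. \<lambda>i\<in>{0..<n}. inv_into B e (\<rho> i)"
  fix \<rho> assume "\<rho> \<in> ?rhs"
  then obtain \<rho>' where \<rho>: "\<rho> \<in> {0..<n} \<rightarrow>\<^sub>E e ` B" and \<rho>': "\<rho>' \<in> ?f x"
    "\<forall>j\<in>{0..<n}. j \<noteq> k \<longrightarrow> \<rho> j = \<rho>' j" by blast
  then have "\<forall>j<n. j \<noteq> k \<longrightarrow> ?inv \<rho> j = ?inv \<rho>' j" by simp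
  moreover have "?inv \<rho>' \<in> g x" using \<rho>'(1) unfolding rename_hom_def by blast
  ultimately have "?inv \<rho> \<in> g (pcyl A {k} x)"
    unfolding df_set_hom_cyl[OF df k x] using rename_inv_PiE[OF \<rho>] by blast
  then show "\<rho> \<in> ?f (pcyl A {k} x)" using \<rho> unfolding rename_hom_def by blast
qed

lemma rename_hom_diag:
  assumes ij: "i < n" "j < n"
  shows "rename_hom n B e g (pdiag A i j) = {\<rho> \<in> {0..<n} \<rightarrow>\<^sub>E e ` B. \<rho> i = \<rho> j}"
proof (intro set_eqI)
  fix \<rho>
  show "\<rho> \<in> rename_hom n B e g (pdiag A i j) \<longleftrightarrow> \<rho> \<in> {\<rho> \<in> {0..<n} \<rightarrow>\<^sub>E e ` B. \<rho> i = \<rho> j}"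
  proof (cases "\<rho> \<in> {0..<n} \<rightarrow>\<^sub>E e ` B")
    case True
    have "\<rho> i \<in> e ` B" "\<rho> j \<in> e ` B" using PiE_mem[OF True] ij by simp_all
    moreover have "inj_on (inv_into B e) (e ` B)" by (rule inj_on_inv_into) simp
    ultimately have "inv_into B e (\<rho> i) = inv_into B e (\<rho> j) \<longleftrightarrow> \<rho> i = \<rho> j"
      using inj_on_eq_iff by fastforce
    then show ?thesis
      using cyl_set_hom_diag[OF hom ij] rename_inv_PiE[OF True] True ij unfolding rename_hom_def by simp
  qed (simp add: rename_hom_def)
qed

lemma cyl_set_hom_rename_hom: "cyl_set_hom n A (e ` B) (rename_hom n B e g)"
  unfolding cyl_set_hom_def df_set_hom_def Let_def pc_def
proof (intro conjI ballI allI impI)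
  note df = cyl_set_hom_df[OF hom]
  show "rename_hom n B e g x \<subseteq> {0..<n} \<rightarrow>\<^sub>E e ` B" for x unfolding rename_hom_def by blast
  show "rename_hom n B e g (pzero A) = {}" using df_set_hom_zero[OF df] unfolding rename_hom_def by simp
  show "rename_hom n B e g (pone A) = {0..<n} \<rightarrow>\<^sub>E e ` B"
    using df_set_hom_one[OF df] rename_inv_PiE unfolding rename_hom_def by blast
  show "rename_hom n B e g (pjoin A x y) = rename_hom n B e g x \<union> rename_hom n B e g y"
    "rename_hom n B e g (pmeet A x y) = rename_hom n B e g x \<inter> rename_hom n B e g y"
    if "x \<in> pcar A" "y \<in> pcar A" for x y
    using df_set_hom_join[OF df that] df_set_hom_meet[OF df that] unfolding rename_hom_def by blast+
  show "rename_hom n B e g (pcompl A x) = ({0..<n} \<rightarrow>\<^sub>E e ` B) - rename_hom n B e g x"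
    if "x \<in> pcar A" for x
    using df_set_hom_compl[OF df that] rename_inv_PiE unfolding rename_hom_def by blast
qed (use rename_hom_cyl rename_hom_diag in blast)+

end

lemma exists_inj_pair_prod_nat: "\<exists>f :: ('x \<times> nat) \<times> ('x \<times> nat) \<Rightarrow> 'x \<times> nat. inj f"
proof -
  have "infinite (UNIV :: ('x \<times> nat) set)" by (simp add: finite_prod)
  then obtain f :: "('x \<times> nat) \<times> ('x \<times> nat) \<Rightarrow> 'x \<times> nat" where "bij_betw f (UNIV \<times> UNIV) UNIV"
    using card_of_ordIso card_of_Times_same_infinite by blast
  then show ?thesis unfolding bij_betw_def by auto
qed

definition pair_code :: "('x \<times> nat) \<times> ('x \<times> nat) \<Rightarrow> 'x \<times> nat" where
  "pair_code = (SOME f. inj f)"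

lemma inj_pair_code: "inj pair_code"
  unfolding pair_code_def using exists_inj_pair_prod_nat by (rule someI_ex)

definition odd_code :: "'x \<times> nat \<Rightarrow> 'x \<times> nat" where
  "odd_code v = (fst v, Suc (2 * snd v))"

lemma odd_code_inj: "odd_code u = odd_code v \<longleftrightarrow> u = v"
  unfolding odd_code_def by (cases u, cases v) auto

primrec list_code :: "('x \<times> nat) list \<Rightarrow> 'x \<times> nat" where
  "list_code [] = (undefined, 0)"
| "list_code (v # vs) = odd_code (pair_code (v, list_code vs))"

lemma inj_list_code: "inj list_code"
proof (rule injI)
  fix xs ys :: "('x \<times> nat) list"
  show "list_code xs = list_code ys \<Longrightarrow> xs = ys"
  proof (induction xs arbitrary: ys)
    case Nil
    then show ?case by (cases ys) (auto simp: odd_code_def)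
  next
    case (Cons v vs)
    then obtain w ws where ys: "ys = w # ws" by (cases ys) (auto simp: odd_code_def)
    with Cons.prems have "pair_code (v, list_code vs) = pair_code (w, list_code ws)"
      by (simp add: odd_code_inj)
    then have "(v, list_code vs) = (w, list_code ws)" by (rule injD[OF inj_pair_code])
    then show ?case using Cons.IH ys by simp
  qed
qed

(* Derivation trees of the witness closure: a leaf names a coordinate of a fixed assignment, a node
  the witness for a cylindrification c_k x at the assignment given by its subtrees. *)
datatype 'x code = Leaf nat | Node "'x code list" nat 'x

primrec code_enc :: "'x code \<Rightarrow> 'x \<times> nat" where
  "code_enc (Leaf i) = (undefined, 2 * i)"
| "code_enc (Node cs k x) = odd_code (pair_code ((x, k), list_code (map code_enc cs)))"

lemma code_enc_Leaf_neq_Node: "code_enc (Leaf i) \<noteq> code_enc (Node cs k x)"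
  by (simp add: odd_code_def) presburger

lemma inj_code_enc: "inj code_enc"
proof (rule injI)
  fix c c' :: "'x code"
  show "code_enc c = code_enc c' \<Longrightarrow> c = c'"
  proof (induction c arbitrary: c')
    case (Leaf i)
    then show ?case by (cases c') (simp, metis code_enc_Leaf_neq_Node)
  next
    case (Node cs k x)
    have "c' \<noteq> Leaf j" for j using Node.prems code_enc_Leaf_neq_Node[of j cs k x] by force
    then obtain cs' k' x' where c': "c' = Node cs' k' x'" by (cases c') auto
    with Node.prems have "pair_code ((x, k), list_code (map code_enc cs)) =
        pair_code ((x', k'), list_code (map code_enc cs'))"
      by (simp add: odd_code_inj)
    then have "((x, k), list_code (map code_enc cs)) = ((x', k'), list_code (map code_enc cs'))"
      by (rule injD[OF inj_pair_code])
    then have xk: "x = x'" "k = k'"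
      and lists: "list_code (map code_enc cs) = list_code (map code_enc cs')" by simp_all
    from lists have "map code_enc cs = map code_enc cs'" by (rule injD[OF inj_list_code])
    then have "cs = cs'"
    proof (rule list.inj_map_strong[rotated])
      fix c c'' assume "c \<in> set cs" "c'' \<in> set cs'" "code_enc c = code_enc c''"
      then show "c = c''" using Node.IH by blast
    qed
    then show ?case using c' xk by simp
  qed
qed

context
  fixes n :: nat and A :: "'a pea" and g :: "'a \<Rightarrow> (nat \<Rightarrow> 'c) set" and \<sigma>\<^sub>0 :: "nat \<Rightarrow> 'c"
begin

definition witness :: "(nat \<Rightarrow> 'c) \<Rightarrow> nat \<Rightarrow> 'a \<Rightarrow> 'c" where
  "witness \<sigma> k x = (if k < n \<and> x \<in> pcar A \<and> (\<exists>\<tau>\<in>g x. \<forall>j<n. j \<noteq> k \<longrightarrow> \<sigma> j = \<tau> j)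
     then (SOME \<tau>. \<tau> \<in> g x \<and> (\<forall>j<n. j \<noteq> k \<longrightarrow> \<sigma> j = \<tau> j)) k else \<sigma>\<^sub>0 0)"

primrec decode :: "'a code \<Rightarrow> 'c" where
  "decode (Leaf i) = (if i < n then \<sigma>\<^sub>0 i else \<sigma>\<^sub>0 0)"
| "decode (Node cs k x) = witness (\<lambda>i\<in>{0..<n}. if i < length cs then map decode cs ! i else \<sigma>\<^sub>0 0) k x"

lemma witness_spec:
  assumes "k < n" "x \<in> pcar A" "\<exists>\<tau>\<in>g x. \<forall>j<n. j \<noteq> k \<longrightarrow> \<sigma> j = \<tau> j"
  shows "\<exists>\<tau>\<in>g x. (\<forall>j<n. j \<noteq> k \<longrightarrow> \<sigma> j = \<tau> j) \<and> \<tau> k = witness \<sigma> k x"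
proof -
  let ?P = "\<lambda>\<tau>. \<tau> \<in> g x \<and> (\<forall>j<n. j \<noteq> k \<longrightarrow> \<sigma> j = \<tau> j)"
  define \<tau> where "\<tau> = (SOME \<tau>. ?P \<tau>)"
  have "\<exists>\<tau>. ?P \<tau>" using assms(3) by blast
  then have P: "?P \<tau>" unfolding \<tau>_def by (rule someI_ex)
  have "witness \<sigma> k x = \<tau> k" unfolding witness_def \<tau>_def using assms by (intro if_P) blast
  then show ?thesis using P by (intro bexI[of _ \<tau>]) simp_all
qed

context
  fixes B :: "'c set"
  assumes hom: "cyl_set_hom n A B g" and \<sigma>\<^sub>0: "\<sigma>\<^sub>0 \<in> {0..<n} \<rightarrow>\<^sub>E B" and n0: "0 < n"
begin

lemma witness_in_base: "witness \<sigma> k x \<in> B"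
proof (cases "k < n \<and> x \<in> pcar A \<and> (\<exists>\<tau>\<in>g x. \<forall>j<n. j \<noteq> k \<longrightarrow> \<sigma> j = \<tau> j)")
  case True
  then obtain \<tau> where "\<tau> \<in> g x" "\<tau> k = witness \<sigma> k x" using witness_spec by blast
  moreover have "\<tau> \<in> {0..<n} \<rightarrow>\<^sub>E B" using \<open>\<tau> \<in> g x\<close> True df_set_hom_subset[OF cyl_set_hom_df[OF hom]] by blast
  ultimately show ?thesis using PiE_mem[of \<tau> "{0..<n}" "\<lambda>_. B" k] True by simp
next
  case False
  then have "witness \<sigma> k x = \<sigma>\<^sub>0 0" unfolding witness_def by (rule if_not_P)
  then show ?thesis using PiE_mem[OF \<sigma>\<^sub>0, of 0] n0 by simp
qed

lemma decode_in_base: "decode c \<in> B"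
  using PiE_mem[OF \<sigma>\<^sub>0] n0 witness_in_base by (cases c) simp_all

lemma decode_witness_closed:
  assumes \<sigma>: "\<sigma> \<in> {0..<n} \<rightarrow>\<^sub>E range decode" and k: "k < n" and x: "x \<in> pcar A"
    and ex: "\<exists>\<tau>\<in>g x. \<forall>j<n. j \<noteq> k \<longrightarrow> \<sigma> j = \<tau> j"
  shows "\<exists>\<tau>\<in>g x. (\<forall>j<n. j \<noteq> k \<longrightarrow> \<sigma> j = \<tau> j) \<and> \<tau> k \<in> range decode"
proof -
  have "\<forall>i\<in>{0..<n}. \<exists>c. \<sigma> i = decode c" using \<sigma> by (auto simp: PiE_iff)
  from bchoice[OF this] obtain C where C: "\<forall>i\<in>{0..<n}. \<sigma> i = decode (C i)" by blast
  have "(\<lambda>i\<in>{0..<n}. if i < length (map C [0..<n]) then map decode (map C [0..<n]) ! i else \<sigma>\<^sub>0 0) = \<sigma>"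
  proof (rule ext)
    fix i
    show "(\<lambda>i\<in>{0..<n}. if i < length (map C [0..<n]) then map decode (map C [0..<n]) ! i else \<sigma>\<^sub>0 0) i = \<sigma> i"
      using C \<sigma> by (cases "i < n") (auto simp: PiE_def extensional_def)
  qed
  then have "decode (Node (map C [0..<n]) k x) = witness \<sigma> k x" by simp
  then show ?thesis using witness_spec[OF k x ex] by (metis rangeI)
qed

end

end

lemma cyl_set_hom_small_base:
  fixes A :: "'a pea" and g :: "'a \<Rightarrow> (nat \<Rightarrow> 'c) set"
  assumes hom: "cyl_set_hom n A B g" and z: "z \<in> pcar A" "\<sigma>\<^sub>0 \<in> g z" and n0: "0 < n"
  shows "\<exists>(B' :: ('a \<times> nat) set) f. cyl_set_hom n A B' f \<and> f z \<noteq> {} \<and>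
           (\<forall>X s. g s = (\<Union>x\<in>X. g x) \<longrightarrow> f s = (\<Union>x\<in>X. f x))"
proof -
  have \<sigma>\<^sub>0: "\<sigma>\<^sub>0 \<in> {0..<n} \<rightarrow>\<^sub>E B" using z df_set_hom_subset[OF cyl_set_hom_df[OF hom]] by blast
  let ?dec = "decode n A g \<sigma>\<^sub>0" and ?g = "\<lambda>x. g x \<inter> ({0..<n} \<rightarrow>\<^sub>E range (decode n A g \<sigma>\<^sub>0))"
  have hom': "cyl_set_hom n A (range ?dec) ?g"
  proof (rule cyl_set_hom_restrict_base[OF hom])
    show "range ?dec \<subseteq> B" using decode_in_base[OF hom \<sigma>\<^sub>0 n0] by blast
    show "\<exists>\<tau>\<in>g x. (\<forall>j<n. j \<noteq> k \<longrightarrow> \<sigma> j = \<tau> j) \<and> \<tau> k \<in> range ?dec"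
      if "\<sigma> \<in> {0..<n} \<rightarrow>\<^sub>E range ?dec" "k < n" "x \<in> pcar A" "\<sigma> \<in> g (pcyl A {k} x)" for \<sigma> k x
      using decode_witness_closed[OF hom \<sigma>\<^sub>0 n0 that(1,2,3)] df_set_hom_cyl[OF cyl_set_hom_df[OF hom] that(2,3)] that(4)
      by blast
  qed
  define e where "e = code_enc \<circ> inv ?dec"
  have "inj_on (inv ?dec) (range ?dec)" by (rule inj_on_inv_into) simp
  then have inj: "inj_on e (range ?dec)"
    unfolding e_def by (rule comp_inj_on) (rule inj_on_subset[OF inj_code_enc subset_UNIV])
  let ?f = "rename_hom n (range ?dec) e ?g"
  have \<sigma>\<^sub>0_dec: "\<sigma>\<^sub>0 i \<in> range ?dec" if "i < n" for i
    using that by (metis decode.simps(1) rangeI)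
  then have \<sigma>\<^sub>0': "\<sigma>\<^sub>0 \<in> {0..<n} \<rightarrow>\<^sub>E range ?dec" using \<sigma>\<^sub>0 by (auto simp: PiE_iff)
  let ?\<rho> = "\<lambda>i\<in>{0..<n}. e (\<sigma>\<^sub>0 i)"
  have "(\<lambda>i\<in>{0..<n}. inv_into (range ?dec) e (?\<rho> i)) = \<sigma>\<^sub>0"
  proof (rule ext)
    fix i
    show "(\<lambda>i\<in>{0..<n}. inv_into (range ?dec) e (?\<rho> i)) i = \<sigma>\<^sub>0 i"
      using inv_into_f_f[OF inj \<sigma>\<^sub>0_dec] \<sigma>\<^sub>0 by (cases "i < n") (auto simp: PiE_def extensional_def)
  qed
  moreover have "?\<rho> \<in> {0..<n} \<rightarrow>\<^sub>E e ` range ?dec" using \<sigma>\<^sub>0_dec by (simp add: restrict_PiE_iff)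
  ultimately have "?\<rho> \<in> ?f z" using \<sigma>\<^sub>0' z(2) unfolding rename_hom_def by (simp only: mem_Collect_eq Int_iff)
  then have "?f z \<noteq> {}" by blast
  moreover have "\<forall>X s. g s = (\<Union>x\<in>X. g x) \<longrightarrow> ?f s = (\<Union>x\<in>X. ?f x)"
    unfolding rename_hom_def by blast
  ultimately show ?thesis using cyl_set_hom_rename_hom[OF hom' inj] by blast
qed

context generated_pea
begin

lemma point_representation:
  assumes hom: "df_set_hom n D U h" and z: "z \<in> car" and t: "t \<in> h z"
  shows "\<exists>(B :: ('a \<times> nat) set) f. pea_set_hom n D B f \<and> f z \<noteq> {} \<and>
           (\<forall>X s. h s = (\<Union>x\<in>X. h x) \<longrightarrow> f s = (\<Union>x\<in>X. f x))"
proof -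
  have "Pi\<^sub>E {0..<n} U \<noteq> {}" using t df_set_hom_subset[OF hom z] by blast
  then interpret df_rep n D U h by unfold_locales (rule hom)
  obtain \<sigma>\<^sub>0 where \<sigma>\<^sub>0: "\<sigma>\<^sub>0 \<in> qhom z" using qhom_nonempty[OF z t] by blast
  have "0 < n" using three_le_dim by simp
  then obtain B :: "('a \<times> nat) set" and f where f: "cyl_set_hom n D B f" "f z \<noteq> {}"
      "\<forall>X s. qhom s = (\<Union>x\<in>X. qhom x) \<longrightarrow> f s = (\<Union>x\<in>X. f x)"
    using cyl_set_hom_small_base[OF cyl_set_hom_qhom z \<sigma>\<^sub>0] by blast
  have "\<forall>X s. h s = (\<Union>x\<in>X. h x) \<longrightarrow> f s = (\<Union>x\<in>X. f x)"
  proof (intro allI impI)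
    fix X s assume "h s = (\<Union>x\<in>X. h x)"
    then have "qhom s = (\<Union>x\<in>X. qhom x)" by (rule qhom_Union)
    then show "f s = (\<Union>x\<in>X. f x)" using f(3) by blast
  qed
  then show ?thesis
    using pea_set_hom_if_cyl_set_hom[OF f(1)] f(2) by (intro exI[of _ B] exI[of _ f]) blast
qed

end

locale df_rep_family = generated_pea +
  fixes K :: "'k set" and U :: "'k \<Rightarrow> nat \<Rightarrow> 'b set" and h :: "'k \<Rightarrow> 'a \<Rightarrow> (nat \<Rightarrow> 'b) set"
  assumes homs: "\<And>k. k \<in> K \<Longrightarrow> df_set_hom n D (U k) (h k)"
    and rep: "complete_rep_family D K h"
begin

definition support :: "'a set" where
  "support = {z \<in> car. \<exists>k\<in>K. h k z \<noteq> {}}"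

definition point_rep :: "'a \<Rightarrow> ('a \<times> nat) set \<times> ('a \<Rightarrow> (nat \<Rightarrow> 'a \<times> nat) set)" where
  "point_rep z = (SOME (B, f). pea_set_hom n D B f \<and> f z \<noteq> {} \<and>
     (\<forall>X s. X \<subseteq> car \<longrightarrow> is_sup D X s \<longrightarrow> f s = (\<Union>x\<in>X. f x)))"

lemma point_rep:
  assumes "z \<in> support"
  shows "pea_set_hom n D (fst (point_rep z)) (snd (point_rep z)) \<and> snd (point_rep z) z \<noteq> {} \<and>
    (\<forall>X s. X \<subseteq> car \<longrightarrow> is_sup D X s \<longrightarrow> snd (point_rep z) s = (\<Union>x\<in>X. snd (point_rep z) x))"
proof -
  obtain k t where z: "z \<in> car" and k: "k \<in> K" and t: "t \<in> h k z"
    using assms unfolding support_def by blast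
  obtain B :: "('a \<times> nat) set" and f where "pea_set_hom n D B f" "f z \<noteq> {}"
      "\<forall>X s. h k s = (\<Union>x\<in>X. h k x) \<longrightarrow> f s = (\<Union>x\<in>X. f x)"
    using point_representation[OF homs[OF k] z t] by blast
  moreover have "h k s = (\<Union>x\<in>X. h k x)" if "X \<subseteq> car" "is_sup D X s" for X s
    using rep that k unfolding complete_rep_family_def by blast
  ultimately have "case (B, f) of (B, f) \<Rightarrow> pea_set_hom n D B f \<and> f z \<noteq> {} \<and>
      (\<forall>X s. X \<subseteq> car \<longrightarrow> is_sup D X s \<longrightarrow> f s = (\<Union>x\<in>X. f x))" by simp
  then show ?thesis unfolding point_rep_def by (rule someI2) (simp add: case_prod_beta)
qed

lemma point_rep_separates:
  assumes xy: "x \<in> car" "y \<in> car" and k: "k \<in> K" and t: "t \<in> h k x" "t \<notin> h k y"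
  shows "\<exists>z\<in>support. snd (point_rep z) x \<noteq> snd (point_rep z) y"
proof -
  let ?z = "meet x (compl y)"
  have "t \<in> h k ?z" using df_set_hom_diff[OF homs[OF k] xy] t by blast
  then have z: "?z \<in> support" unfolding support_def using xy k meet_car compl_car by blast
  then have hom: "pea_set_hom n D (fst (point_rep ?z)) (snd (point_rep ?z))"
    and ne: "snd (point_rep ?z) ?z \<noteq> {}"
    using point_rep by blast+
  have "snd (point_rep ?z) ?z = snd (point_rep ?z) x - snd (point_rep ?z) y"
    by (rule df_set_hom_diff[OF df_set_hom_if_pea_set_hom[OF hom] xy])
  then have "snd (point_rep ?z) x \<noteq> snd (point_rep ?z) y" using ne by auto
  then show ?thesis using z by blast
qed

lemma point_rep_injective:
  assumes xy: "x \<in> car" "y \<in> car" and eq: "\<forall>z\<in>support. snd (point_rep z) x = snd (point_rep z) y"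
  shows "x = y"
proof -
  have "h k x = h k y" if k: "k \<in> K" for k
  proof (rule ccontr)
    assume "h k x \<noteq> h k y"
    then obtain t where "t \<in> h k x \<and> t \<notin> h k y \<or> t \<in> h k y \<and> t \<notin> h k x" by blast
    then show False
    proof (elim disjE conjE)
      assume "t \<in> h k x" "t \<notin> h k y"
      then show False using point_rep_separates[OF xy k] eq by blast
    next
      assume "t \<in> h k y" "t \<notin> h k x"
      then obtain z where "z \<in> support" "snd (point_rep z) y \<noteq> snd (point_rep z) x"
        using point_rep_separates[OF xy(2,1) k] by blast
      then show False using eq by auto
    qed
  qed
  then show ?thesis using rep xy unfolding complete_rep_family_def by blast
qed

lemma pea_completely_representable: "pea_completely_representable n D TYPE('a) TYPE('a \<times> nat)"
proof -
  have "complete_rep_family D support (\<lambda>z. snd (point_rep z))"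
    unfolding complete_rep_family_def
  proof (intro conjI ballI allI impI)
    show "x = y" if "x \<in> car" "y \<in> car" "\<forall>z\<in>support. snd (point_rep z) x = snd (point_rep z) y" for x y
      using point_rep_injective[OF that] .
    show "snd (point_rep z) s = (\<Union>x\<in>X. snd (point_rep z) x)"
      if "X \<subseteq> car" "is_sup D X s" "z \<in> support" for X s z
      using point_rep[OF that(3)] that(1,2) by blast
  qed
  moreover have "\<forall>z\<in>support. pea_set_hom n D (fst (point_rep z)) (snd (point_rep z))"
    using point_rep by blast
  ultimately show ?thesis
    unfolding pea_completely_representable_def
    by (intro exI[of _ support] exI[of _ "\<lambda>z. fst (point_rep z)"] exI[of _ "\<lambda>z. snd (point_rep z)"] conjI)
qed

end

theorem mainTheorem6:
  fixes n :: nat and D :: "'a pea"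
  assumes "n \<ge> 3"
    and "PEA n D"
    and "pea_generated_by n D {x \<in> pcar D. dimset n D x \<noteq> {0..<n}}"
    and "df_completely_representable n D TYPE('k) TYPE('b)"
  shows "pea_completely_representable n D TYPE('a) TYPE('a \<times> nat)"
proof -
  obtain K :: "'k set" and U :: "'k \<Rightarrow> nat \<Rightarrow> 'b set" and h
    where "\<forall>k\<in>K. df_set_hom n D (U k) (h k)" "complete_rep_family D K h"
    using assms(4) unfolding df_completely_representable_def by blast
  then interpret df_rep_family n D K U h
    using assms(1-3) by unfold_locales auto
  show ?thesis by (rule pea_completely_representable)
qed

end
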